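(* Let $\hbar>0$ and work on $L^2(\mathbb{R})$ with $\widehat{x}$ the multiplication operator by $x$ and $\widehat{p}=(\hbar/i)\,d/dx$. Define the operator $$F=S\,(L+X^{-1}R)\,(E_p+Y^{-1/2}O_p)=(E_x+X^{-1/2}O_x)\,(B+Y^{-1}T)\,S,$$ where all operators are as described in the context. Then $F$ is a unitary operator on $L^2(\mathbb{R})$.
   Context: For real $s$, $X^{s}=e^{is\widehat{x}/\hbar}$ and $Y^{s}=e^{is\widehat{p}/\hbar}$ (so $X=e^{i\widehat x/\hbar}$, $Y=e^{i\widehat p/\hbar}$). $S=\exp\!\big(-\tfrac{i\log 2}{2\hbar}(\widehat{x}\widehat{p}+\widehat{p}\widehat{x})\big)$, so that $S^\dagger\widehat x S=2\widehat x$ and $S^\dagger \widehat p S=\widehat p/2$. Position projections (multiplication by indicator functions): $L$ onto $x\in[0,1/2)+\mathbb{Z}$, $R$ onto $x\in[1/2,1)+\mathbb{Z}$, $E_x$ onto $x\in[0,1)+2\mathbb{Z}$, $O_x$ onto $x\in[1,2)+2\mathbb{Z}$. Momentum projections (spectral projections of $\widehat p$, i.e. $\int_A |p\rangle\langle p|\,dp$ with $\langle x|p\rangle=e^{ipx/\hbar}/\sqrt{2\pi\hbar}$): $B$ onto $p\in[0,1/2)+\mathbb{Z}$, $T$ onto $p\in[1/2,1)+\mathbb{Z}$, $E_p$ onto $p\in[0,1)+2\mathbb{Z}$, $O_p$ onto $p\in[1,2)+2\mathbb{Z}$. *)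

theory Defs
  imports "HOL-Analysis.Analysis"
begin

type_synonym wf = "real \<Rightarrow> complex"
type_synonym op = "wf \<Rightarrow> wf"

text \<open>Square-integrable functions (representatives of elements of L2(R)).\<close>
definition sq_int :: "wf \<Rightarrow> bool" where
  "sq_int f \<longleftrightarrow> f \<in> borel_measurable lborel \<and> integrable lborel (\<lambda>x. (cmod (f x))\<^sup>2)"

definition l2norm :: "wf \<Rightarrow> real" where
  "l2norm f = sqrt (integral\<^sup>L lborel (\<lambda>x. (cmod (f x))\<^sup>2))"

definition unitary_L2 :: "op \<Rightarrow> bool" where
  "unitary_L2 U \<longleftrightarrow>
     (\<forall>f. sq_int f \<longrightarrow> sq_int (U f)) \<and>
     (\<forall>f g. sq_int f \<longrightarrow> sq_int g \<longrightarrow> (AE x in lborel. f x = g x) \<longrightarrow>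
        (AE x in lborel. U f x = U g x)) \<and>
     (\<forall>f g a b. sq_int f \<longrightarrow> sq_int g \<longrightarrow>
        (AE x in lborel. U (\<lambda>y. a * f y + b * g y) x = a * U f x + b * U g x)) \<and>
     (\<forall>f. sq_int f \<longrightarrow> l2norm (U f) = l2norm f) \<and>
     (\<forall>g. sq_int g \<longrightarrow> (\<exists>f. sq_int f \<and> (AE x in lborel. U f x = g x)))"

definition ft_trunc :: "real \<Rightarrow> real \<Rightarrow> wf \<Rightarrow> real \<Rightarrow> real \<Rightarrow> complex" where
  "ft_trunc sg hbar f n p =
     (LINT x|lborel. indicator {-n..n} x * (exp (\<i> * of_real (sg * p * x / hbar)) * f x))
       / of_real (sqrt (2 * pi * hbar))"

text \<open>Plancherel (L2) transform: L2-limit of truncated transforms.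
  sg = -1: position to momentum representation (psi~(p) = <p|psi>); sg = 1: inverse.\<close>
definition plancherel :: "real \<Rightarrow> real \<Rightarrow> wf \<Rightarrow> wf" where
  "plancherel sg hbar f = (SOME h. sq_int h \<and>
     (\<lambda>n. LINT p|lborel. (cmod (h p - ft_trunc sg hbar f (real n) p))\<^sup>2) \<longlonglongrightarrow> 0)"

text \<open>Functional calculus of the momentum operator: g(p-hat).\<close>
definition mom_fun :: "real \<Rightarrow> (real \<Rightarrow> complex) \<Rightarrow> op" where
  "mom_fun hbar g f = plancherel 1 hbar (\<lambda>p. g p * plancherel (-1) hbar f p)"

definition pos_fun :: "(real \<Rightarrow> complex) \<Rightarrow> op" where
  "pos_fun g f = (\<lambda>x. g x * f x)"

definition Xpow :: "real \<Rightarrow> real \<Rightarrow> op" where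
  "Xpow hbar s = pos_fun (\<lambda>x. exp (\<i> * of_real (s * x / hbar)))"

definition Ypow :: "real \<Rightarrow> real \<Rightarrow> op" where
  "Ypow hbar s = mom_fun hbar (\<lambda>p. exp (\<i> * of_real (s * p / hbar)))"

text \<open>Dilation S = exp(-i log 2 (xp+px)/(2 hbar)), acting as (S f)(x) = 2^(-1/2) f(x/2).\<close>
definition Sdil :: op where
  "Sdil f = (\<lambda>x. of_real (1 / sqrt 2) * f (x / 2))"

definition op_add :: "op \<Rightarrow> op \<Rightarrow> op" where
  "op_add A B f = (\<lambda>x. A f x + B f x)"

definition setL :: "real set" where "setL = {x. \<exists>k::int. x - of_int k \<in> {0..<1/2}}"
definition setR :: "real set" where "setR = {x. \<exists>k::int. x - of_int k \<in> {1/2..<1}}"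
definition setE :: "real set" where "setE = {x. \<exists>k::int. x - 2 * of_int k \<in> {0..<1}}"
definition setO :: "real set" where "setO = {x. \<exists>k::int. x - 2 * of_int k \<in> {1..<2}}"

definition Lp :: op where "Lp = pos_fun (indicator setL)"
definition Rp :: op where "Rp = pos_fun (indicator setR)"
definition Epos :: op where "Epos = pos_fun (indicator setE)"
definition Opos :: op where "Opos = pos_fun (indicator setO)"
definition Bm :: "real \<Rightarrow> op" where "Bm hbar = mom_fun hbar (indicator setL)"
definition Tm :: "real \<Rightarrow> op" where "Tm hbar = mom_fun hbar (indicator setR)"
definition Ep :: "real \<Rightarrow> op" where "Ep hbar = mom_fun hbar (indicator setE)"
definition Op :: "real \<Rightarrow> op" where "Op hbar = mom_fun hbar (indicator setO)"

end

theory Submission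
  imports Defs "HOL-Probability.Probability"
begin

text \<open>Write $F = S\,A\,M$ with $A = L + X^{-1}R$ and $M = E_p + Y^{-1/2}O_p$. Each factor is
  unitary: $S$ is an $L^2$-normalised dilation, $A$ is multiplication by the unimodular function
  $\mathbf 1_L(x) + e^{-ix/\hbar}\mathbf 1_R(x)$, and $M$ is the unimodular function
  $\mathbf 1_E(p) + e^{-ip/2\hbar}\mathbf 1_O(p)$ of $\widehat p$, i.e.\ a multiplication operator
  conjugated by the Plancherel transform. Plancherel's theorem is proved from scratch: Parseval's
  identity for continuous compactly supported functions comes from damping the Fourier transform by
  a Gaussian (which turns the inverse transform into a heat-kernel convolution), and extends to all
  of $L^2$ by density and completeness. The second expression for $F$ holds because conjugation by
  $S$ halves $\widehat x$ and doubles $\widehat p$, turning $A$ into $E_x + X^{-1/2}O_x$ and $M$ into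
  $B + Y^{-1}T$.\<close>

section \<open>The sets $L$, $R$, $E$, $O$\<close>

lemma setL_iff_frac: "x \<in> setL \<longleftrightarrow> frac x < 1/2"
proof
  assume "x \<in> setL"
  then obtain k :: int where k: "0 \<le> x - k" "x - k < 1/2" unfolding setL_def by auto
  then have "floor x = k" by (intro floor_unique) auto
  then show "frac x < 1/2" using k by (simp add: frac_def)
next
  assume "frac x < 1/2"
  then show "x \<in> setL" unfolding setL_def frac_def by (intro CollectI exI[of _ "floor x"]) auto
qed

lemma setR_iff_frac: "x \<in> setR \<longleftrightarrow> 1/2 \<le> frac x"
proof
  assume "x \<in> setR"
  then obtain k :: int where k: "1/2 \<le> x - k" "x - k < 1" unfolding setR_def by auto
  then have "floor x = k" by (intro floor_unique) auto
  then show "1/2 \<le> frac x" using k by (simp add: frac_def)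
next
  assume "1/2 \<le> frac x"
  then show "x \<in> setR" unfolding setR_def frac_def
    by (intro CollectI exI[of _ "floor x"]) (auto simp: frac_lt_1[unfolded frac_def])
qed

lemma setE_iff_half: "x \<in> setE \<longleftrightarrow> x / 2 \<in> setL"
  unfolding setE_def setL_def by (auto simp: field_simps)

lemma setO_iff_half: "x \<in> setO \<longleftrightarrow> x / 2 \<in> setR"
  unfolding setO_def setR_def by (auto simp: field_simps)

lemma setR_eq_Compl_setL: "setR = - setL"
  by (auto simp: setL_iff_frac setR_iff_frac)

lemma setO_eq_Compl_setE: "setO = - setE"
  by (auto simp: setE_iff_half setO_iff_half setR_eq_Compl_setL)

lemma indicator_setL_half: "indicator setL (x / 2) = (indicator setE x :: 'a::zero_neq_one)"
  by (simp add: indicator_def setE_iff_half)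

lemma indicator_setR_half: "indicator setR (x / 2) = (indicator setO x :: 'a::zero_neq_one)"
  by (simp add: indicator_def setO_iff_half)

lemma borel_measurable_frac[measurable]: "(frac :: real \<Rightarrow> real) \<in> borel_measurable borel"
  unfolding frac_def[abs_def] by (intro borel_measurable_diff borel_measurable_real_floor) auto

lemma setL_sets[measurable]: "setL \<in> sets borel"
proof -
  have "setL = {x. frac x < 1/2}" using setL_iff_frac by auto
  also have "\<dots> \<in> sets borel" by measurable
  finally show ?thesis .
qed

lemma setR_sets[measurable]: "setR \<in> sets borel"
  unfolding setR_eq_Compl_setL by measurable

lemma setE_sets[measurable]: "setE \<in> sets borel"
proof -
  have "setE = {x. frac (x / 2) < 1/2}" using setE_iff_half setL_iff_frac by auto
  also have "\<dots> \<in> sets borel" by measurable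
  finally show ?thesis .
qed

lemma setO_sets[measurable]: "setO \<in> sets borel"
  unfolding setO_eq_Compl_setE by measurable

section \<open>Square-integrable functions\<close>

definition l2sq :: "wf \<Rightarrow> real" where
  "l2sq f = (LINT x|lborel. (cmod (f x))\<^sup>2)"

lemma l2norm_eq_sqrt_l2sq: "l2norm f = sqrt (l2sq f)"
  by (simp add: l2norm_def l2sq_def)

lemma l2sq_nonneg: "0 \<le> l2sq f"
  unfolding l2sq_def by (intro integral_nonneg_AE) auto

lemma l2sq_cmult: "l2sq (\<lambda>x. c * f x) = (cmod c)\<^sup>2 * l2sq f"
  unfolding l2sq_def by (simp add: norm_mult power_mult_distrib)

lemma l2sq_diff_commute: "l2sq (\<lambda>x. f x - g x) = l2sq (\<lambda>x. g x - f x)"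
  unfolding l2sq_def by (simp add: norm_minus_commute)

lemma borel_measurable_cnj[measurable]:
  "f \<in> borel_measurable M \<Longrightarrow> (\<lambda>x. cnj (f x)) \<in> borel_measurable M"
  using borel_measurable_continuous_onI[OF continuous_on_cnj[OF continuous_on_id]]
  by (rule measurable_compose[rotated]) simp

lemma sq_int_measurable[measurable_dest]: "sq_int f \<Longrightarrow> f \<in> borel_measurable borel"
  by (simp add: sq_int_def)

lemma sq_int_integrable: "sq_int f \<Longrightarrow> integrable lborel (\<lambda>x. (cmod (f x))\<^sup>2)"
  by (simp add: sq_int_def)

lemma sq_intI:
  "f \<in> borel_measurable borel \<Longrightarrow> integrable lborel (\<lambda>x. (cmod (f x))\<^sup>2) \<Longrightarrow> sq_int f"
  by (simp add: sq_int_def)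

lemma sq_int_dominated:
  assumes f: "sq_int f" and g: "g \<in> borel_measurable borel" and le: "\<And>x. cmod (g x) \<le> C * cmod (f x)"
  shows "sq_int g"
proof (rule sq_intI[OF g])
  have "integrable lborel (\<lambda>x. C\<^sup>2 * (cmod (f x))\<^sup>2)" using sq_int_integrable[OF f] by simp
  then show "integrable lborel (\<lambda>x. (cmod (g x))\<^sup>2)"
  proof (rule Bochner_Integration.integrable_bound)
    show "AE x in lborel. norm ((cmod (g x))\<^sup>2) \<le> norm (C\<^sup>2 * (cmod (f x))\<^sup>2)"
    proof (intro AE_I2)
      fix x
      have "cmod (g x) \<le> \<bar>C\<bar> * cmod (f x)"
        using le[of x] abs_ge_self[of C] by (meson mult_right_mono norm_ge_zero order_trans)
      then have "(cmod (g x))\<^sup>2 \<le> (\<bar>C\<bar> * cmod (f x))\<^sup>2" by (intro power_mono) auto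
      then show "norm ((cmod (g x))\<^sup>2) \<le> norm (C\<^sup>2 * (cmod (f x))\<^sup>2)"
        by (simp add: power_mult_distrib)
    qed
  qed (use g in measurable)
qed

lemma cmod_add_sq_le: "(cmod (a + b))\<^sup>2 \<le> 2 * (cmod a)\<^sup>2 + 2 * (cmod b)\<^sup>2"
proof -
  have "(cmod (a + b))\<^sup>2 \<le> (cmod a + cmod b)\<^sup>2"
    by (intro power_mono norm_triangle_ineq) auto
  also have "\<dots> \<le> 2 * (cmod a)\<^sup>2 + 2 * (cmod b)\<^sup>2"
    using zero_le_power2[of "cmod a - cmod b"] unfolding power2_diff power2_sum by linarith
  finally show ?thesis .
qed

lemma sq_int_add:
  assumes f: "sq_int f" and g: "sq_int g"
  shows "sq_int (\<lambda>x. f x + g x)"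
proof (rule sq_intI)
  have "integrable lborel (\<lambda>x. 2 * (cmod (f x))\<^sup>2 + 2 * (cmod (g x))\<^sup>2)"
    using sq_int_integrable[OF f] sq_int_integrable[OF g] by simp
  then show "integrable lborel (\<lambda>x. (cmod (f x + g x))\<^sup>2)"
    by (rule Bochner_Integration.integrable_bound) (use f g cmod_add_sq_le in auto)
qed (use f g in measurable)

lemma sq_int_cmult: "sq_int f \<Longrightarrow> sq_int (\<lambda>x. a * f x)"
  by (rule sq_int_dominated[where C="cmod a"]) (auto simp: norm_mult)

lemma sq_int_diff: "sq_int f \<Longrightarrow> sq_int g \<Longrightarrow> sq_int (\<lambda>x. f x - g x)"
  using sq_int_add[of f "\<lambda>x. (-1) * g x"] sq_int_cmult[of g "-1"] by simp

lemma sq_int_lin: "sq_int f \<Longrightarrow> sq_int g \<Longrightarrow> sq_int (\<lambda>x. a * f x + b * g x)"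
  by (intro sq_int_add sq_int_cmult)

lemma sq_int_mult_bounded:
  assumes "sq_int f" "g \<in> borel_measurable borel" "\<And>x. cmod (g x) \<le> B"
  shows "sq_int (\<lambda>x. g x * f x)"
  by (rule sq_int_dominated[where C=B]) (use assms in \<open>auto simp: norm_mult intro!: mult_right_mono\<close>)

lemma sq_int_cong_AE:
  assumes "sq_int f" "g \<in> borel_measurable borel" "AE x in lborel. f x = g x"
  shows "sq_int g"
proof (rule sq_intI)
  show "integrable lborel (\<lambda>x. (cmod (g x))\<^sup>2)"
    using sq_int_integrable[OF assms(1)] by (rule integrable_cong_AE_imp) (use assms in auto)
qed fact

lemma l2sq_cong_AE:
  assumes "f \<in> borel_measurable borel" "g \<in> borel_measurable borel" "AE x in lborel. f x = g x"
  shows "l2sq f = l2sq g"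
  unfolding l2sq_def by (rule integral_cong_AE) (use assms in auto)

lemma l2sq_eq_0_imp_AE:
  assumes "sq_int f" "l2sq f = 0"
  shows "AE x in lborel. f x = 0"
proof -
  have "AE x in lborel. (cmod (f x))\<^sup>2 = 0"
    using assms integral_nonneg_eq_0_iff_AE[OF sq_int_integrable[OF assms(1)]]
    unfolding l2sq_def by auto
  then show ?thesis by auto
qed

lemma l2sq_add_le:
  assumes "sq_int f" "sq_int g"
  shows "l2sq (\<lambda>x. f x + g x) \<le> 2 * l2sq f + 2 * l2sq g"
proof -
  have "l2sq (\<lambda>x. f x + g x) \<le> (LINT x|lborel. 2 * (cmod (f x))\<^sup>2 + 2 * (cmod (g x))\<^sup>2)"
    unfolding l2sq_def
    by (intro integral_mono sq_int_integrable sq_int_add assms cmod_add_sq_le)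
       (use sq_int_integrable[OF assms(1)] sq_int_integrable[OF assms(2)] in auto)
  also have "\<dots> = 2 * l2sq f + 2 * l2sq g"
    unfolding l2sq_def using sq_int_integrable[OF assms(1)] sq_int_integrable[OF assms(2)] by simp
  finally show ?thesis .
qed

lemma l2sq_diff_triangle:
  assumes "sq_int f" "sq_int g" "sq_int k"
  shows "l2sq (\<lambda>x. f x - k x) \<le> 2 * l2sq (\<lambda>x. f x - g x) + 2 * l2sq (\<lambda>x. g x - k x)"
  using l2sq_add_le[OF sq_int_diff[OF assms(1,2)] sq_int_diff[OF assms(2,3)]] by simp

lemma cauchy_schwarz_sq_int:
  assumes f: "sq_int f" and g: "sq_int g"
  shows "integrable lborel (\<lambda>x. cmod (f x) * cmod (g x))"
    and "(LINT x|lborel. cmod (f x) * cmod (g x)) \<le> sqrt (l2sq f) * sqrt (l2sq g)"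
proof -
  have [measurable]: "f \<in> borel_measurable borel" "g \<in> borel_measurable borel" using f g by measurable
  have nn_sq: "(\<integral>\<^sup>+x. ennreal (cmod (k x)) ^ 2 \<partial>lborel) = ennreal (l2sq k)" if "sq_int k" for k
    unfolding l2sq_def using sq_int_integrable[OF that]
    by (subst nn_integral_eq_integral[symmetric]) (auto simp: ennreal_power)
  have "(\<integral>\<^sup>+x. ennreal (cmod (f x)) * ennreal (cmod (g x)) \<partial>lborel)\<^sup>2
      \<le> ennreal (l2sq f) * ennreal (l2sq g)"
    using Cauchy_Schwarz_nn_integral[of "\<lambda>x. ennreal (cmod (f x))" lborel "\<lambda>x. ennreal (cmod (g x))"]
    unfolding nn_sq[OF f] nn_sq[OF g] by simp
  then have le: "(\<integral>\<^sup>+x. ennreal (cmod (f x) * cmod (g x)) \<partial>lborel)\<^sup>2 \<le> ennreal (l2sq f * l2sq g)"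
    by (simp add: ennreal_mult' l2sq_nonneg)
  then have "(\<integral>\<^sup>+x. ennreal (cmod (f x) * cmod (g x)) \<partial>lborel)\<^sup>2 < \<infinity>"
    by (rule le_less_trans) simp
  then have fin: "(\<integral>\<^sup>+x. ennreal (cmod (f x) * cmod (g x)) \<partial>lborel) < \<infinity>"
    by (simp add: power_less_top_ennreal)
  show int: "integrable lborel (\<lambda>x. cmod (f x) * cmod (g x))"
    by (rule integrableI_nonneg) (use fin in auto)
  have "ennreal ((LINT x|lborel. cmod (f x) * cmod (g x))\<^sup>2) \<le> ennreal (l2sq f * l2sq g)"
    using le by (subst (asm) nn_integral_eq_integral[OF int]) (auto simp: ennreal_power)
  then have "(LINT x|lborel. cmod (f x) * cmod (g x))\<^sup>2 \<le> l2sq f * l2sq g"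
    by (simp add: l2sq_nonneg ennreal_le_iff)
  then show "(LINT x|lborel. cmod (f x) * cmod (g x)) \<le> sqrt (l2sq f) * sqrt (l2sq g)"
    by (metis real_le_rsqrt real_sqrt_mult)
qed

lemma integrable_mult_cnj:
  assumes "sq_int f" "sq_int g"
  shows "integrable lborel (\<lambda>x. f x * cnj (g x))"
  by (rule Bochner_Integration.integrable_bound[OF cauchy_schwarz_sq_int(1)[OF assms]])
     (use assms in \<open>auto simp: norm_mult\<close>)

lemma integral_mult_cnj_self: "(CLINT x|lborel. a x * cnj (a x)) = complex_of_real (l2sq a)"
proof -
  have "a x * cnj (a x) = complex_of_real ((cmod (a x))\<^sup>2)" for x
    by (rule complex_norm_square[symmetric])
  then show ?thesis unfolding l2sq_def by (simp only: Bochner_Integration.integral_complex_of_real)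
qed

lemma l2sq_diff_expand:
  assumes a: "sq_int a" and b: "sq_int b"
  shows "l2sq (\<lambda>x. a x - b x) = l2sq a + l2sq b - 2 * Re (CLINT x|lborel. a x * cnj (b x))"
proof -
  have ab: "integrable lborel (\<lambda>x. a x * cnj (b x))" by (rule integrable_mult_cnj[OF a b])
  define r where "r x = Re (a x * cnj (b x))" for x
  have r: "integrable lborel r" unfolding r_def by (rule integrable_bounded_linear[OF bounded_linear_Re ab])
  have "(cmod (a x - b x))\<^sup>2 = (cmod (a x))\<^sup>2 + (cmod (b x))\<^sup>2 - 2 * r x" for x
    unfolding cmod_power2 r_def by (simp add: power2_diff algebra_simps)
  then have "l2sq (\<lambda>x. a x - b x) = (LINT x|lborel. (cmod (a x))\<^sup>2 + (cmod (b x))\<^sup>2 - 2 * r x)"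
    unfolding l2sq_def by simp
  also have "\<dots> = l2sq a + l2sq b - 2 * (LINT x|lborel. r x)"
    unfolding l2sq_def using sq_int_integrable[OF a] sq_int_integrable[OF b] r by simp
  also have "(LINT x|lborel. r x) = Re (CLINT x|lborel. a x * cnj (b x))"
    unfolding r_def by (rule integral_bounded_linear[OF bounded_linear_Re ab])
  finally show ?thesis .
qed

lemma norm_integral_mult_cnj_le:
  assumes "sq_int f" "sq_int g"
  shows "cmod (CLINT x|lborel. f x * cnj (g x)) \<le> sqrt (l2sq f) * sqrt (l2sq g)"
proof -
  have "cmod (CLINT x|lborel. f x * cnj (g x)) \<le> (LINT x|lborel. cmod (f x) * cmod (g x))"
    using integral_norm_bound[of lborel "\<lambda>x. f x * cnj (g x)"] by (simp add: norm_mult)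
  also have "\<dots> \<le> sqrt (l2sq f) * sqrt (l2sq g)" by (rule cauchy_schwarz_sq_int(2)[OF assms])
  finally show ?thesis .
qed

lemma minkowski_sq_int:
  assumes f: "sq_int f" and g: "sq_int g"
  shows "sqrt (l2sq (\<lambda>x. f x + g x)) \<le> sqrt (l2sq f) + sqrt (l2sq g)"
proof -
  have "l2sq (\<lambda>x. f x + g x)
      \<le> (LINT x|lborel. (cmod (f x))\<^sup>2 + (cmod (g x))\<^sup>2 + 2 * (cmod (f x) * cmod (g x)))"
    unfolding l2sq_def
  proof (rule integral_mono)
    show "(cmod (f x + g x))\<^sup>2 \<le> (cmod (f x))\<^sup>2 + (cmod (g x))\<^sup>2 + 2 * (cmod (f x) * cmod (g x))" for x
      using power_mono[OF norm_triangle_ineq[of "f x" "g x"], of 2] by (simp add: power2_sum)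
  qed (use sq_int_integrable[OF sq_int_add[OF f g]] sq_int_integrable[OF f]
         sq_int_integrable[OF g] cauchy_schwarz_sq_int(1)[OF f g] in auto)
  also have "\<dots> = l2sq f + l2sq g + 2 * (LINT x|lborel. cmod (f x) * cmod (g x))"
    unfolding l2sq_def using sq_int_integrable[OF f] sq_int_integrable[OF g]
      cauchy_schwarz_sq_int(1)[OF f g] by simp
  also have "\<dots> \<le> l2sq f + l2sq g + 2 * (sqrt (l2sq f) * sqrt (l2sq g))"
    using cauchy_schwarz_sq_int(2)[OF f g] by simp
  also have "\<dots> = (sqrt (l2sq f) + sqrt (l2sq g))\<^sup>2"
    using l2sq_nonneg[of f] l2sq_nonneg[of g] by (simp add: power2_sum)
  finally show ?thesis by (simp add: real_le_lsqrt l2sq_nonneg)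
qed

lemma abs_sqrt_l2sq_diff_le:
  assumes f: "sq_int f" and g: "sq_int g"
  shows "\<bar>sqrt (l2sq f) - sqrt (l2sq g)\<bar> \<le> sqrt (l2sq (\<lambda>x. f x - g x))"
  using minkowski_sq_int[OF sq_int_diff[OF f g] g] minkowski_sq_int[OF sq_int_diff[OF g f] f]
    l2sq_diff_commute[of f g] by simp

definition l2_tendsto :: "(nat \<Rightarrow> wf) \<Rightarrow> wf \<Rightarrow> bool" where
  "l2_tendsto u a \<longleftrightarrow> (\<lambda>n. l2sq (\<lambda>x. u n x - a x)) \<longlonglongrightarrow> 0"

lemma l2_tendsto_unique_AE:
  assumes u: "\<And>n. sq_int (u n)" and a: "sq_int a" and b: "sq_int b"
    and ua: "l2_tendsto u a" and ub: "l2_tendsto u b"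
  shows "AE x in lborel. a x = b x"
proof -
  have le: "l2sq (\<lambda>x. a x - b x) \<le> 2 * l2sq (\<lambda>x. u n x - a x) + 2 * l2sq (\<lambda>x. u n x - b x)" for n
    using l2sq_diff_triangle[OF a u b, of n] l2sq_diff_commute[of a "u n"] by simp
  have "(\<lambda>n. 2 * l2sq (\<lambda>x. u n x - a x) + 2 * l2sq (\<lambda>x. u n x - b x)) \<longlonglongrightarrow> 2 * 0 + 2 * 0"
    using ua ub unfolding l2_tendsto_def by (intro tendsto_intros)
  then have "l2sq (\<lambda>x. a x - b x) \<le> 0"
    by (intro LIMSEQ_le_const[of _ 0]) (use le in auto)
  then have "l2sq (\<lambda>x. a x - b x) = 0" using l2sq_nonneg[of "\<lambda>x. a x - b x"] by linarith
  from l2sq_eq_0_imp_AE[OF sq_int_diff[OF a b] this] show ?thesis by auto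
qed

lemma l2_tendsto_l2sq:
  assumes u: "\<And>n. sq_int (u n)" and a: "sq_int a" and ua: "l2_tendsto u a"
  shows "(\<lambda>n. l2sq (u n)) \<longlonglongrightarrow> l2sq a"
proof -
  have "(\<lambda>n. sqrt (l2sq (\<lambda>x. u n x - a x))) \<longlonglongrightarrow> 0"
    using tendsto_real_sqrt[OF ua[unfolded l2_tendsto_def]] by simp
  then have "(\<lambda>n. sqrt (l2sq (u n)) - sqrt (l2sq a)) \<longlonglongrightarrow> 0"
    by (rule Lim_null_comparison[rotated]) (use abs_sqrt_l2sq_diff_le[OF u a] in auto)
  then have "(\<lambda>n. sqrt (l2sq (u n))) \<longlonglongrightarrow> sqrt (l2sq a)" by (simp add: LIM_zero_iff)
  then have "(\<lambda>n. (sqrt (l2sq (u n)))\<^sup>2) \<longlonglongrightarrow> (sqrt (l2sq a))\<^sup>2" by (rule tendsto_power)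
  then show ?thesis by (simp add: l2sq_nonneg)
qed

lemma l2_tendsto_inner_left:
  assumes u: "\<And>n. sq_int (u n)" and a: "sq_int a" and b: "sq_int b" and ua: "l2_tendsto u a"
  shows "(\<lambda>n. CLINT x|lborel. u n x * cnj (b x)) \<longlonglongrightarrow> (CLINT x|lborel. a x * cnj (b x))"
proof -
  have diff: "(CLINT x|lborel. u n x * cnj (b x)) - (CLINT x|lborel. a x * cnj (b x))
      = (CLINT x|lborel. (u n x - a x) * cnj (b x))" for n
    using integrable_mult_cnj[OF u b, of n] integrable_mult_cnj[OF a b]
    by (simp add: left_diff_distrib)
  have "(\<lambda>n. CLINT x|lborel. (u n x - a x) * cnj (b x)) \<longlonglongrightarrow> 0"
  proof (rule Lim_null_comparison)
    show "\<forall>\<^sub>F n in sequentially. norm (CLINT x|lborel. (u n x - a x) * cnj (b x))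
        \<le> sqrt (l2sq (\<lambda>x. u n x - a x)) * sqrt (l2sq b)"
      by (intro always_eventually allI norm_integral_mult_cnj_le sq_int_diff u a b)
    show "(\<lambda>n. sqrt (l2sq (\<lambda>x. u n x - a x)) * sqrt (l2sq b)) \<longlonglongrightarrow> 0"
      using tendsto_mult_right[OF tendsto_real_sqrt[OF ua[unfolded l2_tendsto_def]], of "sqrt (l2sq b)"]
      by simp
  qed
  then have "(\<lambda>n. (CLINT x|lborel. u n x * cnj (b x)) - (CLINT x|lborel. a x * cnj (b x))) \<longlonglongrightarrow> 0"
    unfolding diff .
  then show ?thesis by (simp add: LIM_zero_iff)
qed

lemma l2_tendsto_inner_right:
  assumes u: "\<And>n. sq_int (u n)" and a: "sq_int a" and b: "sq_int b" and ua: "l2_tendsto u a"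
  shows "(\<lambda>n. CLINT x|lborel. b x * cnj (u n x)) \<longlonglongrightarrow> (CLINT x|lborel. b x * cnj (a x))"
proof -
  have conj: "(CLINT x|lborel. b x * cnj (f x)) = cnj (CLINT x|lborel. f x * cnj (b x))" for f
  proof -
    have "(CLINT x|lborel. b x * cnj (f x)) = (CLINT x|lborel. cnj (f x * cnj (b x)))"
      by (simp add: mult.commute)
    then show ?thesis by (simp only: Bochner_Integration.integral_cnj)
  qed
  show ?thesis
    unfolding conj by (intro tendsto_cnj l2_tendsto_inner_left assms)
qed

lemma l2_tendsto_dominated:
  assumes [measurable]: "\<And>n. u n \<in> borel_measurable borel" "a \<in> borel_measurable borel"
    and lim: "AE x in lborel. (\<lambda>n. u n x) \<longlonglongrightarrow> a x"
    and w: "integrable lborel w" and bound: "\<And>n x. (cmod (u n x - a x))\<^sup>2 \<le> w x"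
  shows "l2_tendsto u a"
proof -
  have "(\<lambda>n. LINT x|lborel. (cmod (u n x - a x))\<^sup>2) \<longlonglongrightarrow> (LINT (x::real)|lborel. 0)"
  proof (rule integral_dominated_convergence[where s="\<lambda>n x. (cmod (u n x - a x))\<^sup>2" and w=w])
    show "AE x in lborel. (\<lambda>n. (cmod (u n x - a x))\<^sup>2) \<longlonglongrightarrow> 0"
      using lim
    proof eventually_elim
      case (elim x)
      have "(\<lambda>n. (cmod (u n x - a x))\<^sup>2) \<longlonglongrightarrow> (cmod 0)\<^sup>2"
        using elim by (intro tendsto_intros LIM_zero)
      then show ?case by simp
    qed
  qed (use w bound in auto)
  then show ?thesis unfolding l2_tendsto_def l2sq_def by simp
qed

lemma l2_tendsto_if_close:
  assumes u: "\<And>n. sq_int (u n)" and v: "\<And>n. sq_int (v n)" and a: "sq_int a"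
    and ua: "l2_tendsto u a" and vu: "(\<lambda>n. l2sq (\<lambda>x. v n x - u n x)) \<longlonglongrightarrow> 0"
  shows "l2_tendsto v a"
  unfolding l2_tendsto_def
proof (rule tendsto_sandwich[OF _ _ tendsto_const])
  show "\<forall>\<^sub>F n in sequentially. 0 \<le> l2sq (\<lambda>x. v n x - a x)" by (simp add: l2sq_nonneg)
  show "\<forall>\<^sub>F n in sequentially.
      l2sq (\<lambda>x. v n x - a x) \<le> 2 * l2sq (\<lambda>x. v n x - u n x) + 2 * l2sq (\<lambda>x. u n x - a x)"
    by (intro always_eventually allI l2sq_diff_triangle u v a)
  show "(\<lambda>n. 2 * l2sq (\<lambda>x. v n x - u n x) + 2 * l2sq (\<lambda>x. u n x - a x)) \<longlonglongrightarrow> 0"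
    using tendsto_add[OF tendsto_mult[OF tendsto_const vu] tendsto_mult[OF tendsto_const ua[unfolded l2_tendsto_def]], of 2 2]
    by simp
qed

lemma l2sq_diff_tendsto_0:
  assumes u: "\<And>n. sq_int (u n)" and v: "\<And>n. sq_int (v n)" and a: "sq_int a"
    and ua: "l2_tendsto u a" and va: "l2_tendsto v a"
  shows "(\<lambda>n. l2sq (\<lambda>x. u n x - v n x)) \<longlonglongrightarrow> 0"
proof (rule tendsto_sandwich[OF _ _ tendsto_const])
  show "\<forall>\<^sub>F n in sequentially. 0 \<le> l2sq (\<lambda>x. u n x - v n x)" by (simp add: l2sq_nonneg)
  show "\<forall>\<^sub>F n in sequentially.
      l2sq (\<lambda>x. u n x - v n x) \<le> 2 * l2sq (\<lambda>x. u n x - a x) + 2 * l2sq (\<lambda>x. v n x - a x)"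
    using l2sq_diff_triangle[OF u a v] l2sq_diff_commute[of a "v _"] by simp
  show "(\<lambda>n. 2 * l2sq (\<lambda>x. u n x - a x) + 2 * l2sq (\<lambda>x. v n x - a x)) \<longlonglongrightarrow> 0"
    using tendsto_add[OF tendsto_mult[OF tendsto_const ua[unfolded l2_tendsto_def]]
        tendsto_mult[OF tendsto_const va[unfolded l2_tendsto_def]], of 2 2]
    by simp
qed

lemma l2_tendsto_lin:
  assumes u: "\<And>n. sq_int (u n)" and v: "\<And>n. sq_int (v n)" and U: "sq_int U" and V: "sq_int V"
    and uU: "l2_tendsto u U" and vV: "l2_tendsto v V"
  shows "l2_tendsto (\<lambda>n x. a * u n x + b * v n x) (\<lambda>x. a * U x + b * V x)"
  unfolding l2_tendsto_def
proof (rule tendsto_sandwich[OF _ _ tendsto_const])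
  show "\<forall>\<^sub>F n in sequentially. 0 \<le> l2sq (\<lambda>x. a * u n x + b * v n x - (a * U x + b * V x))"
    by (simp add: l2sq_nonneg)
  have "l2sq (\<lambda>x. a * u n x + b * v n x - (a * U x + b * V x))
      \<le> 2 * ((cmod a)\<^sup>2 * l2sq (\<lambda>x. u n x - U x)) + 2 * ((cmod b)\<^sup>2 * l2sq (\<lambda>x. v n x - V x))" for n
  proof -
    have "(\<lambda>x. a * u n x + b * v n x - (a * U x + b * V x)) = (\<lambda>x. a * (u n x - U x) + b * (v n x - V x))"
      by (simp add: fun_eq_iff algebra_simps)
    then show ?thesis
      using l2sq_add_le[OF sq_int_cmult[OF sq_int_diff[OF u U]] sq_int_cmult[OF sq_int_diff[OF v V]], of a n b]
      by (simp only: l2sq_cmult)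
  qed
  then show "\<forall>\<^sub>F n in sequentially. l2sq (\<lambda>x. a * u n x + b * v n x - (a * U x + b * V x))
      \<le> 2 * ((cmod a)\<^sup>2 * l2sq (\<lambda>x. u n x - U x)) + 2 * ((cmod b)\<^sup>2 * l2sq (\<lambda>x. v n x - V x))"
    by simp
  show "(\<lambda>n. 2 * ((cmod a)\<^sup>2 * l2sq (\<lambda>x. u n x - U x)) + 2 * ((cmod b)\<^sup>2 * l2sq (\<lambda>x. v n x - V x))) \<longlonglongrightarrow> 0"
    using tendsto_add[OF tendsto_mult_right[OF tendsto_mult_right[OF uU[unfolded l2_tendsto_def]]]
        tendsto_mult_right[OF tendsto_mult_right[OF vV[unfolded l2_tendsto_def]]], of "(cmod a)\<^sup>2" 2 "(cmod b)\<^sup>2" 2]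
    by (simp add: mult.commute)
qed

lemma sq_int_fatou:
  assumes u: "\<And>n. sq_int (u n)" and a: "a \<in> borel_measurable borel"
    and lim: "AE x in lborel. (\<lambda>n. u n x) \<longlonglongrightarrow> a x"
    and bound: "\<forall>\<^sub>F n in sequentially. l2sq (u n) \<le> B"
  shows "sq_int a" and "l2sq a \<le> B"
proof -
  have "(\<integral>\<^sup>+x. ennreal ((cmod (a x))\<^sup>2) \<partial>lborel) = (\<integral>\<^sup>+x. liminf (\<lambda>n. ennreal ((cmod (u n x))\<^sup>2)) \<partial>lborel)"
  proof (rule nn_integral_cong_AE)
    show "AE x in lborel. ennreal ((cmod (a x))\<^sup>2) = liminf (\<lambda>n. ennreal ((cmod (u n x))\<^sup>2))"
      using lim
    proof eventually_elim
      case (elim x)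
      then have "(\<lambda>n. ennreal ((cmod (u n x))\<^sup>2)) \<longlonglongrightarrow> ennreal ((cmod (a x))\<^sup>2)"
        by (intro tendsto_ennrealI tendsto_intros)
      from lim_imp_Liminf[OF _ this] show ?case by simp
    qed
  qed
  also have "\<dots> \<le> liminf (\<lambda>n. \<integral>\<^sup>+x. ennreal ((cmod (u n x))\<^sup>2) \<partial>lborel)"
    by (rule nn_integral_liminf) (use u in measurable)
  also have "\<dots> = liminf (\<lambda>n. ennreal (l2sq (u n)))"
    unfolding l2sq_def by (subst nn_integral_eq_integral) (use sq_int_integrable[OF u] in auto)
  also have "\<dots> \<le> ennreal B"
    by (rule Liminf_le) (use bound in \<open>auto elim!: eventually_mono intro: ennreal_leI\<close>)
  finally have le: "(\<integral>\<^sup>+x. ennreal ((cmod (a x))\<^sup>2) \<partial>lborel) \<le> ennreal B" .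
  have int: "integrable lborel (\<lambda>x. (cmod (a x))\<^sup>2)"
    by (rule integrableI_bounded) (use a le in \<open>auto simp: le_less_trans\<close>)
  then show "sq_int a" using a by (rule sq_intI[rotated])
  have "0 \<le> B"
    using bound l2sq_nonneg by (auto simp: eventually_sequentially intro: order_trans)
  moreover have "ennreal (l2sq a) \<le> ennreal B"
    unfolding l2sq_def using le by (subst (asm) nn_integral_eq_integral[OF int]) auto
  ultimately show "l2sq a \<le> B" by simp
qed

lemma summable_if_summable_pow2_mult_sq:
  fixes d :: "nat \<Rightarrow> real"
  assumes sum: "summable (\<lambda>k. 2^k * (d k)\<^sup>2)" and nonneg: "\<And>k. 0 \<le> d k"
  shows "summable d"
proof (rule summable_comparison_test')
  show "summable (\<lambda>k. (2^k * (d k)\<^sup>2 + (1/2)^k) / 2)"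
    using sum by (intro summable_divide summable_add) (auto intro: summable_geometric)
  have "d k \<le> (2^k * (d k)\<^sup>2 + (1/2)^k) / 2" for k
  proof -
    have "0 \<le> (1/2)^k * (2^k * d k - 1)\<^sup>2" by simp
    also have "\<dots> = 2^k * (d k)\<^sup>2 + (1/2)^k - 2 * d k"
      by (simp add: power2_eq_square field_simps power_mult_distrib[symmetric])
    finally show ?thesis by simp
  qed
  then show "norm (d k) \<le> (2^k * (d k)\<^sup>2 + (1/2)^k) / 2" for k using nonneg[of k] by simp
qed

lemma convergent_if_summable_norm_diff:
  fixes v :: "nat \<Rightarrow> 'a::banach"
  assumes "summable (\<lambda>k. norm (v (Suc k) - v k))"
  shows "convergent v"
proof -
  have "(\<lambda>n. v 0 + (\<Sum>k<n. v (Suc k) - v k)) \<longlonglongrightarrow> v 0 + (\<Sum>k. v (Suc k) - v k)"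
    by (rule tendsto_add[OF tendsto_const summable_LIMSEQ[OF summable_norm_cancel[OF assms]]])
  then show ?thesis unfolding sum_lessThan_telescope convergent_def by auto
qed

lemma AE_convergent_if_l2sq_steps_le:
  assumes v: "\<And>k. sq_int (v k)" and step: "\<And>k. l2sq (\<lambda>x. v (Suc k) x - v k x) \<le> (1/8)^k"
  shows "AE x in lborel. convergent (\<lambda>k. v k x)"
proof -
  define d where "d k x = cmod (v (Suc k) x - v k x)" for k x
  have [measurable]: "(\<lambda>x. d k x) \<in> borel_measurable borel" for k
    unfolding d_def using v by measurable
  define T where "T x = (\<Sum>k. ennreal (2^k * (d k x)\<^sup>2))" for x
  have "(\<integral>\<^sup>+x. T x \<partial>lborel) = (\<Sum>k. \<integral>\<^sup>+x. ennreal (2^k * (d k x)\<^sup>2) \<partial>lborel)"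
    unfolding T_def by (rule nn_integral_suminf) measurable
  also have "\<dots> = (\<Sum>k. ennreal (2^k * l2sq (\<lambda>x. v (Suc k) x - v k x)))"
    using sq_int_integrable[OF sq_int_diff[OF v v]]
    by (subst nn_integral_eq_integral) (auto simp: l2sq_def d_def)
  also have "\<dots> \<noteq> top"
  proof (rule ennreal_suminf_neq_top)
    have "2^k * l2sq (\<lambda>x. v (Suc k) x - v k x) \<le> (1/4::real)^k" for k
      using mult_left_mono[OF step[of k], of "2^k"] by (simp add: power_mult_distrib[symmetric])
    then show "summable (\<lambda>k. 2^k * l2sq (\<lambda>x. v (Suc k) x - v k x))"
      by (intro summable_comparison_test'[OF summable_geometric[of "1/4"]]) (auto simp: l2sq_nonneg)
  qed (simp add: l2sq_nonneg)
  finally have "AE x in lborel. T x \<noteq> \<infinity>" by (intro nn_integral_PInf_AE) (auto simp: T_def)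
  then show ?thesis
  proof eventually_elim
    case (elim x)
    have "summable (\<lambda>k. 2^k * (d k x)\<^sup>2)"
      by (rule summable_suminf_not_top) (use elim in \<open>auto simp: T_def\<close>)
    then have "summable (\<lambda>k. d k x)"
      by (rule summable_if_summable_pow2_mult_sq) (simp add: d_def)
    then show "convergent (\<lambda>k. v k x)"
      unfolding d_def by (rule convergent_if_summable_norm_diff)
  qed
qed

definition l2_cauchy :: "(nat \<Rightarrow> wf) \<Rightarrow> bool" where
  "l2_cauchy u \<longleftrightarrow> (\<forall>e>0. \<exists>N. \<forall>m\<ge>N. \<forall>n\<ge>N. l2sq (\<lambda>x. u m x - u n x) < e)"

lemma l2_cauchy_if_tendsto:
  assumes u: "\<And>n. sq_int (u n)" and a: "sq_int a" and ua: "l2_tendsto u a"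
  shows "l2_cauchy u"
  unfolding l2_cauchy_def
proof (intro allI impI)
  fix e :: real assume "e > 0"
  then obtain N where N: "\<And>n. n \<ge> N \<Longrightarrow> l2sq (\<lambda>x. u n x - a x) < e / 4"
    using ua[unfolded l2_tendsto_def, THEN order_tendstoD(2), of "e / 4"]
    by (auto simp: eventually_sequentially)
  have "l2sq (\<lambda>x. u m x - u n x) < e" if "m \<ge> N" "n \<ge> N" for m n
    using l2sq_diff_triangle[OF u a u, of m n] N[OF that(1)] N[OF that(2)]
      l2sq_diff_commute[of a "u n"] by simp
  then show "\<exists>N. \<forall>m\<ge>N. \<forall>n\<ge>N. l2sq (\<lambda>x. u m x - u n x) < e" by blast
qed

text \<open>Fatou's lemma upgrades almost-everywhere convergence of a subsequence of an
  $L^2$-Cauchy sequence to $L^2$-convergence of the whole sequence.\<close>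

lemma l2_tendsto_if_cauchy_AE:
  assumes u: "\<And>n. sq_int (u n)" and cauchy: "l2_cauchy u"
    and r: "filterlim r at_top sequentially" and a: "a \<in> borel_measurable borel"
    and lim: "AE x in lborel. (\<lambda>k. u (r k) x) \<longlonglongrightarrow> a x"
  shows "sq_int a" and "l2_tendsto u a"
proof -
  have close: "sq_int (\<lambda>x. a x - u j x) \<and> l2sq (\<lambda>x. a x - u j x) \<le> e"
    if N: "\<forall>m\<ge>N. \<forall>n\<ge>N. l2sq (\<lambda>x. u m x - u n x) < e" and j: "j \<ge> N" for e N j
  proof -
    have "AE x in lborel. (\<lambda>k. u (r k) x - u j x) \<longlonglongrightarrow> a x - u j x"
      using lim by eventually_elim (intro tendsto_intros)
    moreover have "\<forall>\<^sub>F k in sequentially. l2sq (\<lambda>x. u (r k) x - u j x) \<le> e"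
      using r[unfolded filterlim_at_top, rule_format, of N] N j
      by (auto elim!: eventually_mono intro: less_imp_le)
    moreover have "(\<lambda>x. a x - u j x) \<in> borel_measurable borel" using a u by measurable
    ultimately show ?thesis
      using sq_int_fatou[of "\<lambda>k x. u (r k) x - u j x"] u by (blast intro: sq_int_diff)
  qed
  obtain N where "\<forall>m\<ge>N. \<forall>n\<ge>N. l2sq (\<lambda>x. u m x - u n x) < 1"
    using cauchy[unfolded l2_cauchy_def, rule_format, of 1] by auto
  then have "sq_int (\<lambda>x. a x - u N x)" using close by blast
  from sq_int_add[OF this u[of N]] show a_sq: "sq_int a" by simp
  show "l2_tendsto u a"
    unfolding l2_tendsto_def
  proof (rule LIMSEQ_I)
    fix e :: real assume "e > 0"
    then obtain N where N: "\<forall>m\<ge>N. \<forall>n\<ge>N. l2sq (\<lambda>x. u m x - u n x) < e / 2"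
      using cauchy unfolding l2_cauchy_def by (meson half_gt_zero)
    have "norm (l2sq (\<lambda>x. u j x - a x) - 0) < e" if "j \<ge> N" for j
      using conjunct2[OF close[OF N that]] l2sq_diff_commute[of a "u j"] l2sq_nonneg[of "\<lambda>x. u j x - a x"]
        \<open>e > 0\<close> by simp
    then show "\<exists>no. \<forall>n\<ge>no. norm (l2sq (\<lambda>x. u n x - a x) - 0) < e" by blast
  qed
qed

lemma l2_complete:
  assumes u: "\<And>n. sq_int (u n)" and cauchy: "l2_cauchy u"
  shows "\<exists>a. sq_int a \<and> l2_tendsto u a"
proof -
  have "\<forall>k::nat. \<exists>N. \<forall>m\<ge>N. \<forall>n\<ge>N. l2sq (\<lambda>x. u m x - u n x) < (1/8)^k"
    using cauchy unfolding l2_cauchy_def by simp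
  then obtain N where N: "\<And>k m n. N k \<le> m \<Longrightarrow> N k \<le> n \<Longrightarrow> l2sq (\<lambda>x. u m x - u n x) < (1/8)^k"
    by metis
  define r where "r k = (\<Sum>j\<le>k. N j) + k" for k
  have rN: "N k \<le> r j" if "k \<le> j" for k j
    unfolding r_def using that by (intro trans_le_add1 member_le_sum) auto
  have "k \<le> r k" for k by (simp add: r_def)
  then have r: "filterlim r at_top sequentially"
    by (auto simp: filterlim_at_top eventually_sequentially intro: order_trans)
  have steps: "l2sq (\<lambda>x. u (r (Suc k)) x - u (r k) x) \<le> (1/8)^k" for k
    using less_imp_le[OF N[OF rN[of k "Suc k"] rN[of k k]]] by simp
  define a where "a x = lim (\<lambda>k. u (r k) x)" for x
  have a: "a \<in> borel_measurable borel"
    unfolding a_def[abs_def] using u by measurable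
  have "AE x in lborel. (\<lambda>k. u (r k) x) \<longlonglongrightarrow> a x"
    using AE_convergent_if_l2sq_steps_le[of "\<lambda>k. u (r k)", OF u steps]
    by eventually_elim (simp add: a_def convergent_LIMSEQ_iff)
  from l2_tendsto_if_cauchy_AE[OF u cauchy r a this] show ?thesis by blast
qed

section \<open>The Fourier integral on compactly supported functions\<close>

definition supported_in :: "real \<Rightarrow> wf \<Rightarrow> bool" where
  "supported_in R g \<longleftrightarrow> (\<forall>x. R < \<bar>x\<bar> \<longrightarrow> g x = 0)"

definition cs_sq_int :: "wf \<Rightarrow> bool" where
  "cs_sq_int g \<longleftrightarrow> sq_int g \<and> (\<exists>R. supported_in R g)"

definition truncate :: "real \<Rightarrow> wf \<Rightarrow> wf" where
  "truncate R f x = indicator {-R..R} x * f x"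

lemma supported_in_diff:
  "supported_in R f \<Longrightarrow> supported_in S g \<Longrightarrow> supported_in (max R S) (\<lambda>x. f x - g x)"
  unfolding supported_in_def by auto

lemma cs_sq_int_diff: "cs_sq_int f \<Longrightarrow> cs_sq_int g \<Longrightarrow> cs_sq_int (\<lambda>x. f x - g x)"
  unfolding cs_sq_int_def using sq_int_diff supported_in_diff by blast

lemma truncate_measurable[measurable]:
  "f \<in> borel_measurable borel \<Longrightarrow> truncate R f \<in> borel_measurable borel"
  unfolding truncate_def[abs_def] by measurable

lemma sq_int_truncate: "sq_int f \<Longrightarrow> sq_int (truncate R f)"
  unfolding truncate_def by (rule sq_int_mult_bounded[where B=1]) (auto simp: indicator_def)

lemma cs_sq_int_truncate: "sq_int f \<Longrightarrow> cs_sq_int (truncate R f)"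
  unfolding cs_sq_int_def supported_in_def using sq_int_truncate[of f R]
  by (auto simp: truncate_def indicator_def intro!: exI[of _ R])

lemma l2_tendsto_truncate:
  assumes f: "sq_int f" and R: "filterlim R at_top sequentially"
  shows "l2_tendsto (\<lambda>n. truncate (R n) f) f"
proof (rule l2_tendsto_dominated[OF _ _ _ sq_int_integrable[OF f]])
  show "AE x in lborel. (\<lambda>n. truncate (R n) f x) \<longlonglongrightarrow> f x"
  proof (intro AE_I2 tendsto_eventually)
    fix x
    show "\<forall>\<^sub>F n in sequentially. truncate (R n) f x = f x"
      using R[unfolded filterlim_at_top, rule_format, of "\<bar>x\<bar>"]
      by (rule eventually_mono) (auto simp: truncate_def indicator_def abs_le_iff)
  qed
  show "(cmod (truncate (R n) f x - f x))\<^sup>2 \<le> (cmod (f x))\<^sup>2" for n x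
    by (auto simp: truncate_def indicator_def)
qed (use f in measurable)

lemma sq_int_indicator_Icc: "sq_int (\<lambda>x. complex_of_real (indicator {-R..R} x))"
proof (rule sq_intI)
  have "integrable lborel (indicator {-R..R} :: real \<Rightarrow> real)"
    by (intro integrable_real_indicator) (auto simp: emeasure_lborel_Icc_eq)
  moreover have "(cmod (complex_of_real (indicator {-R..R} x)))\<^sup>2 = indicator {-R..R} x" for x
    by (simp add: indicator_def)
  ultimately show "integrable lborel (\<lambda>x. (cmod (complex_of_real (indicator {-R..R} x)))\<^sup>2)"
    by simp
qed simp

lemma integrable_if_supported_in:
  assumes d: "sq_int d" and R: "supported_in R d"
  shows "integrable lborel d"
    and "(LINT x|lborel. cmod (d x)) \<le> sqrt (l2sq (\<lambda>x. complex_of_real (indicator {-R..R} x))) * sqrt (l2sq d)"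
proof -
  have "d x = 0" if "x \<notin> {-R..R}" for x
  proof -
    have "R < \<bar>x\<bar>" using that by auto
    then show ?thesis using R by (simp add: supported_in_def)
  qed
  then have eq: "(\<lambda>x. cmod (complex_of_real (indicator {-R..R} x)) * cmod (d x)) = (\<lambda>x. cmod (d x))"
    by (auto simp: indicator_def fun_eq_iff)
  show "integrable lborel d"
    using cauchy_schwarz_sq_int(1)[OF sq_int_indicator_Icc d, of R] d
    unfolding eq by (simp add: integrable_norm_iff)
  show "(LINT x|lborel. cmod (d x)) \<le> sqrt (l2sq (\<lambda>x. complex_of_real (indicator {-R..R} x))) * sqrt (l2sq d)"
    using cauchy_schwarz_sq_int(2)[OF sq_int_indicator_Icc d, of R] unfolding eq .
qed

lemma cs_sq_int_integrable: "cs_sq_int g \<Longrightarrow> integrable lborel g"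
  unfolding cs_sq_int_def using integrable_if_supported_in(1) by blast

definition fourier :: "real \<Rightarrow> real \<Rightarrow> wf \<Rightarrow> real \<Rightarrow> complex" where
  "fourier sg h g p =
     (CLINT x|lborel. exp (\<i> * of_real (sg * p * x / h)) * g x) / of_real (sqrt (2 * pi * h))"

lemma ft_trunc_eq_fourier_truncate: "ft_trunc sg h f R = fourier sg h (truncate R f)"
  unfolding ft_trunc_def fourier_def truncate_def by (auto simp: mult.left_commute)

lemma borel_measurable_iexp[measurable]:
  "g \<in> borel_measurable M \<Longrightarrow> (\<lambda>z. exp (\<i> * complex_of_real (g z))) \<in> borel_measurable M"
  using borel_measurable_continuous_onI[OF continuous_on_exp[OF continuous_on_mult_left[OF continuous_on_of_real[OF continuous_on_id]]]]
  by (rule measurable_compose[rotated]) simp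

lemma fourier_measurable[measurable]:
  assumes [measurable]: "g \<in> borel_measurable borel"
  shows "fourier sg h g \<in> borel_measurable borel"
proof -
  have "(\<lambda>p. CLINT x|lborel. exp (\<i> * of_real (sg * p * x / h)) * g x) \<in> borel_measurable borel"
    by (rule lborel.borel_measurable_lebesgue_integral) measurable
  then show ?thesis unfolding fourier_def[abs_def] by measurable
qed

lemma fubini_bounded_kernel:
  fixes a b :: "real \<Rightarrow> complex" and k :: "real \<times> real \<Rightarrow> complex"
  assumes a: "integrable lborel a" and b: "integrable lborel b"
    and k[measurable]: "k \<in> borel_measurable borel" and k_le: "\<And>z. cmod (k z) \<le> 1"
  shows "(CLINT p|lborel. b p * (CLINT x|lborel. a x * k (p, x)))
       = (CLINT x|lborel. a x * (CLINT p|lborel. b p * k (p, x)))"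
proof -
  define f where "f p x = b p * (a x * k (p, x))" for p x
  have prod: "integrable (lborel \<Otimes>\<^sub>M lborel) (\<lambda>(p, x). b p * a x)"
  proof (rule lborel_pair.Fubini_integrable)
    show "integrable lborel (\<lambda>p. LINT x|lborel. norm (case (p, x) of (p, x) \<Rightarrow> b p * a x))"
      using b by (simp add: norm_mult)
  qed (use a b in \<open>auto simp: norm_mult\<close>)
  have int: "integrable (lborel \<Otimes>\<^sub>M lborel) (case_prod f)"
  proof (rule Bochner_Integration.integrable_bound[OF prod])
    show "case_prod f \<in> borel_measurable (lborel \<Otimes>\<^sub>M lborel)"
      unfolding f_def using a b by (simp add: borel_prod[symmetric]) measurable
    show "AE z in lborel \<Otimes>\<^sub>M lborel. norm (case_prod f z) \<le> norm (case z of (p, x) \<Rightarrow> b p * a x)"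
      using k_le by (intro AE_I2) (auto simp: f_def norm_mult mult_left_le mult_left_mono split: prod.split)
  qed
  have "(CLINT p|lborel. b p * (CLINT x|lborel. a x * k (p, x))) = (CLINT p|lborel. CLINT x|lborel. f p x)"
    unfolding f_def by simp
  also have "\<dots> = (CLINT x|lborel. CLINT p|lborel. f p x)"
    using lborel_pair.Fubini_integral[OF int] by simp
  also have "\<dots> = (CLINT x|lborel. a x * (CLINT p|lborel. b p * k (p, x)))"
    unfolding f_def by (simp add: mult.left_commute)
  finally show ?thesis .
qed

lemma fourier_lin:
  assumes f: "integrable lborel f" and g: "integrable lborel g"
  shows "fourier sg h (\<lambda>x. a * f x + b * g x) p = a * fourier sg h f p + b * fourier sg h g p"
proof -
  let ?e = "\<lambda>x. exp (\<i> * of_real (sg * p * x / h))"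
  have "integrable lborel (\<lambda>x. ?e x * f x)" "integrable lborel (\<lambda>x. ?e x * g x)"
    using f g by (auto intro: Bochner_Integration.integrable_bound simp: norm_mult)
  then have "(CLINT x|lborel. ?e x * (a * f x + b * g x))
      = a * (CLINT x|lborel. ?e x * f x) + b * (CLINT x|lborel. ?e x * g x)"
    by (simp add: algebra_simps)
  then show ?thesis unfolding fourier_def by (simp add: add_divide_distrib)
qed

lemma fourier_diff:
  assumes "integrable lborel f" "integrable lborel g"
  shows "fourier sg h (\<lambda>x. f x - g x) p = fourier sg h f p - fourier sg h g p"
  using fourier_lin[OF assms, where a=1 and b="-1"] by simp

lemma norm_fourier_le:
  assumes "0 < h" "integrable lborel g"
  shows "cmod (fourier sg h g p) \<le> (LINT x|lborel. cmod (g x)) / sqrt (2 * pi * h)"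
proof -
  have "cmod (CLINT x|lborel. exp (\<i> * of_real (sg * p * x / h)) * g x) \<le> (LINT x|lborel. cmod (g x))"
    using integral_norm_bound[of lborel "\<lambda>x. exp (\<i> * of_real (sg * p * x / h)) * g x"]
    by (simp add: norm_mult)
  then show ?thesis unfolding fourier_def using assms by (simp add: norm_divide divide_right_mono)
qed

lemma fourier_adjoint:
  assumes a: "integrable lborel a" and b: "integrable lborel b"
  shows "(CLINT p|lborel. fourier sg h a p * cnj (b p)) = (CLINT x|lborel. a x * cnj (fourier (-sg) h b x))"
proof -
  define c where "c = complex_of_real (sqrt (2 * pi * h))"
  define k where "k = (\<lambda>(p::real, x::real). exp (\<i> * complex_of_real (sg * p * x / h)))"
  have k[measurable]: "k \<in> borel_measurable borel"
    unfolding k_def by (simp add: borel_prod[symmetric]) measurable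
  have cnj_fourier: "cnj (fourier (-sg) h b x) = (CLINT p|lborel. cnj (b p) * k (p, x)) / c" for x
  proof -
    have "cnj (exp (\<i> * complex_of_real (- sg * x * p / h))) = k (p, x)" for p
      unfolding k_def by (simp add: exp_cnj mult_ac)
    then show ?thesis
      unfolding fourier_def c_def
      by (simp add: Bochner_Integration.integral_cnj[symmetric] mult.commute)
  qed
  have "(CLINT p|lborel. fourier sg h a p * cnj (b p))
      = (CLINT p|lborel. cnj (b p) * (CLINT x|lborel. a x * k (p, x))) / c"
    unfolding fourier_def c_def k_def by (simp add: mult_ac)
  also have "\<dots> = (CLINT x|lborel. a x * (CLINT p|lborel. cnj (b p) * k (p, x))) / c"
    using fubini_bounded_kernel[OF a _ k, of "\<lambda>p. cnj (b p)"] b by (simp add: k_def split: prod.split)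
  also have "\<dots> = (CLINT x|lborel. a x * cnj (fourier (-sg) h b x))"
    unfolding cnj_fourier by simp
  finally show ?thesis .
qed

section \<open>Gaussian regularisation\<close>

lemma integral_gauss_iexp:
  fixes e t :: real
  assumes e: "e > 0"
  shows "(CLINT p|lborel. complex_of_real (exp (- (e * p)\<^sup>2 / 2)) * iexp (t * p))
       = complex_of_real (sqrt (2 * pi) / e * exp (- (t / e)\<^sup>2 / 2))"
proof -
  define f where "f x = std_normal_density x *\<^sub>R iexp (t / e * x)" for x
  have "(CLINT x|lborel. f x) = char std_normal_distribution (t / e)"
    unfolding char_def f_def by (subst integral_density) auto
  also have "\<dots> = complex_of_real (exp (- (t / e)\<^sup>2 / 2))"
    using char_std_normal_distribution by simp
  finally have "\<bar>e\<bar> *\<^sub>R (CLINT p|lborel. f (0 + e * p)) = complex_of_real (exp (- (t / e)\<^sup>2 / 2))"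
    using lborel_integral_real_affine[of e f 0] e by simp
  then have "(CLINT p|lborel. f (e * p)) = complex_of_real (exp (- (t / e)\<^sup>2 / 2) / e)"
    using e by (simp add: scaleR_conv_of_real field_simps)
  moreover have "complex_of_real (exp (- (e * p)\<^sup>2 / 2)) * iexp (t * p)
      = complex_of_real (sqrt (2 * pi)) * f (e * p)" for p
    unfolding f_def std_normal_density_def using e by (simp add: scaleR_conv_of_real)
  ultimately show ?thesis by simp
qed

lemma integrable_gauss:
  fixes e :: real
  assumes "e > 0"
  shows "integrable lborel (\<lambda>p. exp (- (e * p)\<^sup>2 / 2))"
proof -
  have "integrable lborel (\<lambda>p. sqrt (2 * pi) * std_normal_density (0 + e * p))"
    using lborel_integrable_real_affine[of std_normal_density e 0] assms by simp
  then show ?thesis by (simp add: std_normal_density_def)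
qed

definition gauss_smooth :: "real \<Rightarrow> wf \<Rightarrow> wf" where
  "gauss_smooth s phi x = (CLINT y|lborel. phi y * complex_of_real (normal_density 0 s (y - x)))"

lemma gauss_smooth_measurable[measurable]:
  assumes [measurable]: "phi \<in> borel_measurable borel"
  shows "gauss_smooth s phi \<in> borel_measurable borel"
  unfolding gauss_smooth_def[abs_def] by (rule lborel.borel_measurable_lebesgue_integral) measurable

lemma gauss_smooth_eq_integral_std_normal:
  assumes s: "s > 0"
  shows "gauss_smooth s phi x = (CLINT t|lborel. phi (x + s * t) * complex_of_real (std_normal_density t))"
proof -
  have "s * normal_density 0 s (s * t) = std_normal_density t" for t
    using s by (simp add: normal_density_def real_sqrt_mult power_mult_distrib)
  then have "\<bar>s\<bar> *\<^sub>R (phi (x + s * t) * complex_of_real (normal_density 0 s (x + s * t - x)))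
      = phi (x + s * t) * complex_of_real (std_normal_density t)" for t
    using s by (simp add: scaleR_conv_of_real mult.left_commute flip: of_real_mult)
  then show ?thesis
    unfolding gauss_smooth_def using s
    by (subst lborel_integral_real_affine[where c=s and t=x]) (auto simp flip: integral_scaleR_right)
qed

lemma tendsto_gauss_smooth:
  assumes cont: "continuous_on UNIV phi" and M: "\<And>x. cmod (phi x) \<le> M"
    and s: "\<And>n. s n > 0" and s0: "s \<longlonglongrightarrow> 0"
  shows "(\<lambda>n. gauss_smooth (s n) phi x) \<longlonglongrightarrow> phi x"
proof -
  have [measurable]: "phi \<in> borel_measurable borel" using cont by (rule borel_measurable_continuous_onI)
  have "(\<lambda>n. CLINT t|lborel. phi (x + s n * t) * complex_of_real (std_normal_density t))
      \<longlonglongrightarrow> (CLINT t|lborel. phi x * complex_of_real (std_normal_density t))"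
  proof (rule integral_dominated_convergence[where w="\<lambda>t. M * std_normal_density t"])
    show "AE t in lborel. (\<lambda>n. phi (x + s n * t) * complex_of_real (std_normal_density t))
        \<longlonglongrightarrow> phi x * complex_of_real (std_normal_density t)"
    proof (intro AE_I2 tendsto_intros)
      fix t
      have "(\<lambda>n. x + s n * t) \<longlonglongrightarrow> x + 0 * t" by (intro tendsto_intros s0)
      moreover have "isCont phi x" using cont by (simp add: continuous_on_eq_continuous_at)
      ultimately show "(\<lambda>n. phi (x + s n * t)) \<longlonglongrightarrow> phi x"
        using isCont_tendsto_compose by fastforce
    qed
  qed (use M in \<open>auto intro!: AE_I2 mult_right_mono simp: norm_mult\<close>)
  then show ?thesis
    unfolding gauss_smooth_eq_integral_std_normal[OF s] by simp
qed

lemma norm_gauss_smooth_le: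
  assumes [measurable]: "phi \<in> borel_measurable borel" and M: "\<And>x. cmod (phi x) \<le> M" and s: "s > 0"
  shows "cmod (gauss_smooth s phi x) \<le> M"
proof -
  have "cmod (gauss_smooth s phi x) \<le> (LINT t|lborel. cmod (phi (x + s * t) * complex_of_real (std_normal_density t)))"
    unfolding gauss_smooth_eq_integral_std_normal[OF s] by (rule integral_norm_bound)
  also have "\<dots> \<le> (LINT t|lborel. M * std_normal_density t)"
  proof (rule integral_mono)
    have bound: "cmod (phi (x + s * t) * complex_of_real (std_normal_density t)) \<le> M * std_normal_density t" for t
      using M by (auto simp: norm_mult intro!: mult_right_mono)
    have "0 \<le> M" using M[of 0] norm_ge_zero order_trans by blast
    then have le: "cmod (phi (x + s * t) * complex_of_real (std_normal_density t)) \<le> norm (M * std_normal_density t)" for t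
      using bound[of t] by simp
    show int: "integrable lborel (\<lambda>t. M * std_normal_density t)" by simp
    show "integrable lborel (\<lambda>t. cmod (phi (x + s * t) * complex_of_real (std_normal_density t)))"
      by (rule Bochner_Integration.integrable_bound[OF int]) (use le in auto)
    show "cmod (phi (x + s * t) * complex_of_real (std_normal_density t)) \<le> M * std_normal_density t" for t
      by (rule bound)
  qed
  also have "\<dots> = M" by simp
  finally show ?thesis .
qed

locale fourier_kernel =
  fixes sg h :: real
  assumes h_pos: "0 < h" and sg_sq: "sg\<^sup>2 = 1"
begin

lemma fourier_kernel_neg: "fourier_kernel (-sg) h"
  using h_pos sg_sq by unfold_locales simp_all

lemma scaled_gauss_eq_normal_density:
  assumes e: "e > 0"
  shows "sqrt (2 * pi) / e * exp (- (sg * t / h / e)\<^sup>2 / 2) / (2 * pi * h) = normal_density 0 (e * h) t"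
proof -
  have sq: "- (sg * t / h / e)\<^sup>2 / 2 = - (t - 0)\<^sup>2 / (2 * (e * h)\<^sup>2)"
    using sg_sq by (simp add: power_divide power_mult_distrib)
  have "sqrt (2 * pi) * sqrt (2 * pi) = 2 * pi" by simp
  then have const: "sqrt (2 * pi) / e / (2 * pi * h) = 1 / sqrt (2 * pi * (e * h)\<^sup>2)"
    using e h_pos by (simp add: real_sqrt_mult field_simps)
  have "sqrt (2 * pi) / e * exp (- (sg * t / h / e)\<^sup>2 / 2) / (2 * pi * h)
      = exp (- (sg * t / h / e)\<^sup>2 / 2) * (sqrt (2 * pi) / e / (2 * pi * h))"
    by (simp only: divide_inverse mult_ac)
  also have "\<dots> = normal_density 0 (e * h) t"
    unfolding sq const normal_density_def by simp
  finally show ?thesis .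
qed

lemma fourier_gauss_fourier:
  assumes phi: "integrable lborel phi" and e: "e > 0"
  shows "fourier (-sg) h (\<lambda>p. complex_of_real (exp (- (e * p)\<^sup>2 / 2)) * fourier sg h phi p) x
       = gauss_smooth (e * h) phi x"
proof -
  define c where "c = complex_of_real (sqrt (2 * pi * h))"
  define w where "w p = complex_of_real (exp (- (e * p)\<^sup>2 / 2))" for p
  define k where "k = (\<lambda>(p::real, y::real). exp (\<i> * complex_of_real (sg * (y - x) / h * p)))"
  have k[measurable]: "k \<in> borel_measurable borel"
    unfolding k_def by (simp add: borel_prod[symmetric]) measurable
  have w_int: "integrable lborel w" unfolding w_def using integrable_gauss[OF e] by simp
  have kernel: "exp (\<i> * complex_of_real (- sg * x * p / h)) * exp (\<i> * complex_of_real (sg * p * y / h))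
      = k (p, y)" for p y
    unfolding k_def using h_pos by (simp add: exp_add[symmetric] field_simps flip: distrib_left of_real_add)
  have heat: "(CLINT p|lborel. w p * k (p, y)) / c / c = complex_of_real (normal_density 0 (e * h) (y - x))" for y
  proof -
    have "(CLINT p|lborel. w p * k (p, y)) = complex_of_real (sqrt (2 * pi) / e * exp (- (sg * (y - x) / h / e)\<^sup>2 / 2))"
      unfolding w_def k_def using integral_gauss_iexp[OF e, of "sg * (y - x) / h"] by simp
    moreover have "c * c = complex_of_real (2 * pi * h)" unfolding c_def using h_pos
      by (simp only: real_sqrt_mult_self flip: of_real_mult) simp
    moreover note scaled_gauss_eq_normal_density[OF e, of "y - x"]
    ultimately show ?thesis by (simp only: divide_divide_eq_left flip: of_real_divide)
  qed
  have "fourier (-sg) h (\<lambda>p. w p * fourier sg h phi p) x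
      = (CLINT p|lborel. w p * (CLINT y|lborel. phi y * k (p, y))) / c / c"
    unfolding fourier_def c_def[symmetric]
    by (simp add: mult_ac kernel[symmetric] flip: integral_mult_right_zero)
  also have "\<dots> = (CLINT y|lborel. phi y * (CLINT p|lborel. w p * k (p, y))) / c / c"
    using fubini_bounded_kernel[OF phi w_int k] by (simp add: k_def split: prod.split)
  also have "\<dots> = gauss_smooth (e * h) phi x"
    unfolding gauss_smooth_def by (simp add: heat[symmetric])
  finally show ?thesis unfolding w_def .
qed

end

section \<open>Parseval's identity\<close>

definition test_fun :: "wf \<Rightarrow> bool" where
  "test_fun g \<longleftrightarrow> continuous_on UNIV g \<and> (\<exists>M. \<forall>x. cmod (g x) \<le> M) \<and> (\<exists>R. supported_in R g)"

lemma test_fun_measurable: "test_fun g \<Longrightarrow> g \<in> borel_measurable borel"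
  unfolding test_fun_def by (auto intro: borel_measurable_continuous_onI)

lemma sq_int_if_bounded_supported:
  assumes [measurable]: "g \<in> borel_measurable borel"
    and M: "\<And>x. cmod (g x) \<le> M" and R: "supported_in R g"
  shows "sq_int g"
proof (rule sq_int_dominated[OF sq_int_indicator_Icc, where C=M])
  show "cmod (g x) \<le> M * cmod (complex_of_real (indicator {-R..R} x))" for x
    using M[of x] R by (cases "x \<in> {-R..R}") (auto simp: supported_in_def abs_le_iff)
qed simp

lemma test_fun_cs_sq_int: "test_fun g \<Longrightarrow> cs_sq_int g"
  unfolding cs_sq_int_def
  using sq_int_if_bounded_supported test_fun_measurable by (metis test_fun_def)

lemma test_fun_diff: "test_fun f \<Longrightarrow> test_fun g \<Longrightarrow> test_fun (\<lambda>x. f x - g x)"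
  unfolding test_fun_def
proof (elim conjE exE, intro conjI exI)
  fix M1 M2 R1 R2
  assume "\<forall>x. cmod (f x) \<le> M1" "\<forall>x. cmod (g x) \<le> M2"
  then show "\<forall>x. cmod (f x - g x) \<le> M1 + M2"
    by (metis add_mono norm_triangle_ineq4 order_trans)
  show "supported_in R1 f \<Longrightarrow> supported_in R2 g \<Longrightarrow> supported_in (max R1 R2) (\<lambda>x. f x - g x)"
    by (rule supported_in_diff)
qed (auto intro: continuous_intros)

lemma tendsto_inner_gauss_smooth:
  assumes phi: "test_fun phi" and s: "\<And>n. s n > 0" "s \<longlonglongrightarrow> 0"
  shows "(\<lambda>n. CLINT x|lborel. phi x * cnj (gauss_smooth (s n) phi x)) \<longlonglongrightarrow> complex_of_real (l2sq phi)"
proof -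
  obtain M where M: "\<And>x. cmod (phi x) \<le> M" and cont: "continuous_on UNIV phi"
    using phi unfolding test_fun_def by blast
  have [measurable]: "phi \<in> borel_measurable borel" by (rule test_fun_measurable[OF phi])
  have "(\<lambda>n. CLINT x|lborel. phi x * cnj (gauss_smooth (s n) phi x)) \<longlonglongrightarrow> (CLINT x|lborel. phi x * cnj (phi x))"
  proof (rule integral_dominated_convergence[where w="\<lambda>x. cmod (phi x) * M"])
    show "AE x in lborel. (\<lambda>n. phi x * cnj (gauss_smooth (s n) phi x)) \<longlonglongrightarrow> phi x * cnj (phi x)"
      using s by (intro AE_I2 tendsto_intros tendsto_gauss_smooth[OF cont M])
    show "AE x in lborel. norm (phi x * cnj (gauss_smooth (s n) phi x)) \<le> cmod (phi x) * M" for n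
      using norm_gauss_smooth_le[OF _ M s(1)] by (intro AE_I2) (simp add: norm_mult mult_left_mono)
    show "integrable lborel (\<lambda>x. cmod (phi x) * M)"
      using cs_sq_int_integrable[OF test_fun_cs_sq_int[OF phi]] by simp
  qed simp_all
  then show ?thesis unfolding integral_mult_cnj_self .
qed

lemma l2sq_eq_lim_weighted:
  fixes w :: "nat \<Rightarrow> real \<Rightarrow> real"
  assumes [measurable]: "F \<in> borel_measurable borel" "\<And>n. w n \<in> borel_measurable borel"
    and int: "\<And>n. integrable lborel (\<lambda>p. w n p * (cmod (F p))\<^sup>2)"
    and w_nonneg: "\<And>n p. 0 \<le> w n p" and w_le_1: "\<And>n p. w n p \<le> 1"
    and w_lim: "\<And>p. (\<lambda>n. w n p) \<longlonglongrightarrow> 1"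
    and lim: "(\<lambda>n. LINT p|lborel. w n p * (cmod (F p))\<^sup>2) \<longlonglongrightarrow> L"
  shows "sq_int F" and "l2sq F = L"
proof -
  define u where "u n p = complex_of_real (sqrt (w n p)) * F p" for n p
  have u_sq: "(cmod (u n p))\<^sup>2 = w n p * (cmod (F p))\<^sup>2" for n p
    unfolding u_def using w_nonneg[of n p] by (simp add: norm_mult power_mult_distrib)
  have u: "sq_int (u n)" for n
  proof (rule sq_intI)
    show "integrable lborel (\<lambda>p. (cmod (u n p))\<^sup>2)" unfolding u_sq by (rule int)
  qed (unfold u_def, measurable)
  have u_lim: "AE p in lborel. (\<lambda>n. u n p) \<longlonglongrightarrow> F p"
    using w_lim by (intro AE_I2) (auto simp: u_def intro!: tendsto_eq_intros)
  have fatou: "sq_int F \<and> l2sq F \<le> L + d" if "d > 0" for d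
  proof -
    have "\<forall>\<^sub>F n in sequentially. l2sq (u n) \<le> L + d"
      using order_tendstoD(2)[OF lim, of "L + d"] that
      by (auto elim!: eventually_mono simp: l2sq_def u_sq)
    with sq_int_fatou[OF u _ u_lim] show ?thesis by simp
  qed
  then show F: "sq_int F" using zero_less_one by blast
  have "l2sq F \<le> L" using fatou by (meson field_le_epsilon)
  moreover have "L \<le> l2sq F"
  proof (rule LIMSEQ_le_const2[OF lim], intro exI allI impI)
    show "(LINT p|lborel. w n p * (cmod (F p))\<^sup>2) \<le> l2sq F" for n
      unfolding l2sq_def using int sq_int_integrable[OF F] w_nonneg w_le_1
      by (intro integral_mono mult_left_le_one_le) auto
  qed
  ultimately show "l2sq F = L" by simp
qed

context fourier_kernel
begin

lemma integral_gauss_sq_fourier: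
  assumes phi: "integrable lborel phi" and e: "e > 0"
  shows "complex_of_real (LINT p|lborel. exp (- (e * p)\<^sup>2 / 2) * (cmod (fourier sg h phi p))\<^sup>2)
       = (CLINT x|lborel. phi x * cnj (gauss_smooth (e * h) phi x))"
proof -
  define F where "F = fourier sg h phi"
  define b where "b p = complex_of_real (exp (- (e * p)\<^sup>2 / 2)) * F p" for p
  have [measurable]: "phi \<in> borel_measurable borel" using phi by auto
  define K where "K = (LINT x|lborel. cmod (phi x)) / sqrt (2 * pi * h)"
  have b_int: "integrable lborel b"
  proof (rule Bochner_Integration.integrable_bound)
    show "integrable lborel (\<lambda>p. K * exp (- (e * p)\<^sup>2 / 2))"
      using integrable_gauss[OF e] by simp
    have "cmod (b p) \<le> K * exp (- (e * p)\<^sup>2 / 2)" for p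
    proof -
      have "cmod (b p) = exp (- (e * p)\<^sup>2 / 2) * cmod (F p)" by (simp add: b_def norm_mult)
      also have "\<dots> \<le> exp (- (e * p)\<^sup>2 / 2) * K"
        unfolding F_def K_def by (intro mult_left_mono norm_fourier_le[OF h_pos phi]) simp
      finally show ?thesis by (simp add: mult.commute)
    qed
    moreover have "0 \<le> K"
      unfolding K_def using h_pos by (auto intro!: divide_nonneg_nonneg integral_nonneg_AE)
    ultimately show "AE p in lborel. norm (b p) \<le> norm (K * exp (- (e * p)\<^sup>2 / 2))"
      by (intro AE_I2) simp
  qed (unfold b_def F_def, measurable)
  have "F p * cnj (b p) = complex_of_real (exp (- (e * p)\<^sup>2 / 2) * (cmod (F p))\<^sup>2)" for p
    unfolding b_def using complex_norm_square[of "F p"] by (simp add: mult_ac)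
  then have "complex_of_real (LINT p|lborel. exp (- (e * p)\<^sup>2 / 2) * (cmod (F p))\<^sup>2)
      = (CLINT p|lborel. F p * cnj (b p))"
    by (simp add: Bochner_Integration.integral_complex_of_real[symmetric])
  also have "\<dots> = (CLINT x|lborel. phi x * cnj (fourier (-sg) h b x))"
    unfolding F_def by (rule fourier_adjoint[OF phi b_int])
  also have "fourier (-sg) h b = gauss_smooth (e * h) phi"
    unfolding b_def F_def by (rule ext, rule fourier_gauss_fourier[OF phi e])
  finally show ?thesis unfolding F_def .
qed

lemma parseval_test_fun:
  assumes "test_fun phi"
  shows "sq_int (fourier sg h phi)" and "l2sq (fourier sg h phi) = l2sq phi"
proof -
  have [measurable]: "phi \<in> borel_measurable borel" by (rule test_fun_measurable[OF assms])
  have phi_int: "integrable lborel phi"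
    using cs_sq_int_integrable[OF test_fun_cs_sq_int[OF assms]] .
  define K where "K = (LINT x|lborel. cmod (phi x)) / sqrt (2 * pi * h)"
  have F_le: "cmod (fourier sg h phi p) \<le> K" for p
    unfolding K_def by (rule norm_fourier_le[OF h_pos phi_int])
  define e where "e n = 1 / real (Suc n)" for n
  have e_pos: "e n > 0" for n unfolding e_def by simp
  have e_lim: "e \<longlonglongrightarrow> 0" unfolding e_def by (rule LIMSEQ_inverse_real_of_nat[unfolded inverse_eq_divide])
  define w where "w n p = exp (- (e n * p)\<^sup>2 / 2)" for n p
  have int: "integrable lborel (\<lambda>p. w n p * (cmod (fourier sg h phi p))\<^sup>2)" for n
  proof (rule Bochner_Integration.integrable_bound)
    show "integrable lborel (\<lambda>p. K\<^sup>2 * w n p)"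
      unfolding w_def using integrable_gauss[OF e_pos] by simp
    show "AE p in lborel. norm (w n p * (cmod (fourier sg h phi p))\<^sup>2) \<le> norm (K\<^sup>2 * w n p)"
      using F_le by (intro AE_I2) (auto simp: w_def mult.commute intro!: mult_left_mono power_mono)
  qed (simp add: w_def)
  have w_lim: "(\<lambda>n. w n p) \<longlonglongrightarrow> 1" for p
    unfolding w_def using e_lim by (auto intro!: tendsto_eq_intros)
  have "(\<lambda>n. LINT p|lborel. w n p * (cmod (fourier sg h phi p))\<^sup>2) \<longlonglongrightarrow> l2sq phi"
    using tendsto_inner_gauss_smooth[OF assms, of "\<lambda>n. e n * h"] e_pos e_lim h_pos
    unfolding w_def integral_gauss_sq_fourier[OF phi_int e_pos, symmetric]
    by (simp add: tendsto_of_real_iff tendsto_mult_left_zero)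
  from l2sq_eq_lim_weighted[OF _ _ int _ _ w_lim this]
  show "sq_int (fourier sg h phi)" "l2sq (fourier sg h phi) = l2sq phi"
    by (auto simp: w_def)
qed

end

lemma AE_tendsto_continuous_approx:
  assumes "g \<in> borel_measurable borel"
  obtains psi :: "nat \<Rightarrow> wf"
  where "\<And>n. continuous_on UNIV (psi n)" and "AE x in lborel. (\<lambda>n. psi n x) \<longlonglongrightarrow> g x"
proof -
  have "g measurable_on UNIV"
    using assms by (intro lebesgue_measurable_imp_measurable_on measurable_completion) auto
  then obtain N psi where N: "negligible N" and cont: "\<And>n. continuous_on UNIV (psi n)"
    and lim: "\<And>x. x \<notin> N \<Longrightarrow> (\<lambda>n. psi n x) \<longlonglongrightarrow> g x"
    unfolding measurable_on_def by auto
  have "AE x in lebesgue. x \<notin> N"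
    using N by (intro AE_not_in) (simp add: negligible_iff_null_sets)
  then have "AE x in lborel. (\<lambda>n. psi n x) \<longlonglongrightarrow> g x"
    by (simp add: AE_completion_iff) (rule AE_mp, auto intro: lim)
  with cont show ?thesis by (rule that)
qed

definition clip :: "real \<Rightarrow> complex \<Rightarrow> complex" where
  "clip M z = complex_of_real (max (-M) (min M (Re z))) + \<i> * complex_of_real (max (-M) (min M (Im z)))"

lemma clip_eq_self: "cmod z \<le> M \<Longrightarrow> clip M z = z"
  using abs_Re_le_cmod[of z] abs_Im_le_cmod[of z] by (auto simp: clip_def complex_eq_iff)

lemma norm_clip_le: "0 \<le> M \<Longrightarrow> cmod (clip M z) \<le> 2 * M"
  unfolding clip_def
  by (rule norm_triangle_ineq[THEN order_trans]) (auto simp: norm_mult)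

lemma continuous_on_clip: "continuous_on UNIV f \<Longrightarrow> continuous_on UNIV (\<lambda>x. clip M (f x))"
  unfolding clip_def by (intro continuous_intros)

lemma tendsto_clip: "f \<longlonglongrightarrow> a \<Longrightarrow> (\<lambda>n. clip M (f n)) \<longlonglongrightarrow> clip M a"
  unfolding clip_def by (intro tendsto_intros)

definition cutoff :: "real \<Rightarrow> real \<Rightarrow> real" where
  "cutoff R x = max 0 (min 1 (R + 1 - \<bar>x\<bar>))"

lemma test_fun_cutoff_clip:
  assumes psi: "continuous_on UNIV psi" and M: "0 \<le> M"
  shows "test_fun (\<lambda>x. complex_of_real (cutoff R x) * clip M (psi x))"
    and "supported_in (R + 1) (\<lambda>x. complex_of_real (cutoff R x) * clip M (psi x))"
    and "cmod (complex_of_real (cutoff R x) * clip M (psi x)) \<le> 2 * M"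
proof -
  have le: "cmod (complex_of_real (cutoff R y) * clip M (psi y)) \<le> 2 * M" for y
  proof -
    have "cmod (complex_of_real (cutoff R y) * clip M (psi y)) \<le> cmod (clip M (psi y))"
      unfolding norm_mult by (simp add: cutoff_def mult_left_le_one_le)
    also have "\<dots> \<le> 2 * M" by (rule norm_clip_le[OF M])
    finally show ?thesis .
  qed
  then show "cmod (complex_of_real (cutoff R x) * clip M (psi x)) \<le> 2 * M" .
  show supp: "supported_in (R + 1) (\<lambda>x. complex_of_real (cutoff R x) * clip M (psi x))"
    unfolding supported_in_def cutoff_def by simp
  have "continuous_on UNIV (\<lambda>x. complex_of_real (cutoff R x) * clip M (psi x))"
    unfolding cutoff_def by (intro continuous_intros continuous_on_clip psi)
  with le supp show "test_fun (\<lambda>x. complex_of_real (cutoff R x) * clip M (psi x))"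
    unfolding test_fun_def by blast
qed

lemma test_fun_approx_bounded:
  assumes g_meas[measurable]: "g \<in> borel_measurable borel"
    and M: "\<And>x. cmod (g x) \<le> M" and R: "supported_in R g"
  obtains phi where "\<And>n. test_fun (phi n)" "\<And>n. supported_in (R + 1) (phi n)" "l2_tendsto phi g"
proof -
  have M_nonneg: "0 \<le> M" using M[of 0] norm_ge_zero order_trans by blast
  obtain psi where psi_cont: "\<And>n. continuous_on UNIV (psi n)"
    and psi_lim: "AE x in lborel. (\<lambda>n. psi n x) \<longlonglongrightarrow> g x"
    using AE_tendsto_continuous_approx[OF g_meas] by blast
  define phi where "phi n x = complex_of_real (cutoff R x) * clip M (psi n x)" for n x
  have phi_test: "test_fun (phi n)" and phi_supp: "supported_in (R + 1) (phi n)"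
    and phi_le: "cmod (phi n x) \<le> 2 * M" for n x
    unfolding phi_def using test_fun_cutoff_clip[OF psi_cont M_nonneg] by auto
  have g_eq: "g x = complex_of_real (cutoff R x) * clip M (g x)" for x
  proof (cases "R < \<bar>x\<bar>")
    case True
    then show ?thesis using R M_nonneg by (simp add: supported_in_def clip_eq_self)
  next
    case False
    then show ?thesis by (simp add: cutoff_def clip_eq_self[OF M])
  qed
  have "l2_tendsto phi g"
  proof (rule l2_tendsto_dominated[where w="\<lambda>x. (3 * M)\<^sup>2 * indicator {-(R+1)..R+1} x"])
    show "AE x in lborel. (\<lambda>n. phi n x) \<longlonglongrightarrow> g x"
      using psi_lim by eventually_elim (subst g_eq, unfold phi_def, intro tendsto_intros tendsto_clip)
    show "integrable lborel (\<lambda>x. (3 * M)\<^sup>2 * indicator {-(R+1)..R+1} x :: real)"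
      by (intro integrable_mult_right integrable_real_indicator) (auto simp: emeasure_lborel_Icc_eq)
    show "(cmod (phi n x - g x))\<^sup>2 \<le> (3 * M)\<^sup>2 * indicator {-(R+1)..R+1} x" for n x
    proof (cases "x \<in> {-(R+1)..R+1}")
      case True
      have "cmod (phi n x - g x) \<le> 3 * M"
        using norm_triangle_ineq4[of "phi n x" "g x"] phi_le[of n x] M[of x] by simp
      then have "(cmod (phi n x - g x))\<^sup>2 \<le> (3 * M)\<^sup>2" by (intro power_mono) auto
      with True show ?thesis by simp
    next
      case False
      then have "R + 1 < \<bar>x\<bar>" by auto
      then show ?thesis using phi_supp[of n] R False by (simp add: supported_in_def)
    qed
  qed (use phi_test test_fun_measurable in auto)
  with phi_test phi_supp show ?thesis by (rule that)
qed

lemma l2_tendsto_cut_large_values: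
  assumes g: "sq_int g"
  shows "l2_tendsto (\<lambda>k x. if cmod (g x) \<le> real k then g x else 0) g"
proof (rule l2_tendsto_dominated[OF _ _ _ sq_int_integrable[OF g]])
  show "AE x in lborel. (\<lambda>k. if cmod (g x) \<le> real k then g x else 0) \<longlonglongrightarrow> g x"
  proof (intro AE_I2 tendsto_eventually)
    fix x
    obtain n :: nat where "cmod (g x) \<le> real n" using real_arch_simple by blast
    then show "\<forall>\<^sub>F k in sequentially. (if cmod (g x) \<le> real k then g x else 0) = g x"
      unfolding eventually_sequentially by (intro exI[of _ n] allI impI) (auto intro: order_trans)
  qed
qed (use g in auto)

lemma test_fun_dense:
  assumes g: "cs_sq_int g"
  obtains phi R where "\<And>k. test_fun (phi k)" "\<And>k. supported_in R (phi k)" "l2_tendsto phi g"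
proof -
  obtain R where R: "supported_in R g" and g_sq: "sq_int g" using g cs_sq_int_def by auto
  have [measurable]: "g \<in> borel_measurable borel" using g_sq by measurable
  \<comment> \<open>First cut $g$ off where $|g| > k$, then approximate the bounded pieces.\<close>
  define gk where "gk k x = (if cmod (g x) \<le> real k then g x else 0)" for k x
  have [measurable]: "gk k \<in> borel_measurable borel" for k
    unfolding gk_def[abs_def] by measurable
  have gk_sq: "sq_int (gk k)" for k
    by (rule sq_int_dominated[OF g_sq, where C=1]) (auto simp: gk_def)
  have gk_lim: "l2_tendsto gk g"
    unfolding gk_def[abs_def] by (rule l2_tendsto_cut_large_values[OF g_sq])
  obtain Phi where Phi_test: "\<And>k n. test_fun (Phi k n)"
    and Phi_supp: "\<And>k n. supported_in (R + 1) (Phi k n)" and Phi_lim: "\<And>k. l2_tendsto (Phi k) (gk k)"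
  proof -
    have "\<exists>phi. (\<forall>n. test_fun (phi n)) \<and> (\<forall>n. supported_in (R + 1) (phi n)) \<and> l2_tendsto phi (gk k)" for k
      by (rule test_fun_approx_bounded[of "gk k" "real k" R]) (use R in \<open>auto simp: gk_def supported_in_def\<close>)
    then show ?thesis using that by metis
  qed
  have "\<exists>n. l2sq (\<lambda>x. Phi k n x - gk k x) < 1 / real (Suc k)" for k
    using Phi_lim[of k, unfolded l2_tendsto_def, THEN order_tendstoD(2), of "1 / real (Suc k)"]
    by (auto simp: eventually_sequentially)
  then obtain nk where nk: "\<And>k. l2sq (\<lambda>x. Phi k (nk k) x - gk k x) < 1 / real (Suc k)" by metis
  define phi where "phi k = Phi k (nk k)" for k
  have phi_sq: "sq_int (phi k)" for k
    using test_fun_cs_sq_int[OF Phi_test] by (simp add: phi_def cs_sq_int_def)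
  have "l2_tendsto phi g"
  proof (rule l2_tendsto_if_close[OF gk_sq phi_sq g_sq gk_lim])
    have "(\<lambda>k. 1 / real (Suc k)) \<longlonglongrightarrow> 0" by (rule LIMSEQ_Suc[OF lim_inverse_n'])
    then show "(\<lambda>k. l2sq (\<lambda>x. phi k x - gk k x)) \<longlonglongrightarrow> 0"
      by (rule tendsto_sandwich[OF _ _ tendsto_const, rotated 2])
         (use nk in \<open>auto simp: phi_def l2sq_nonneg less_imp_le\<close>)
  qed
  with Phi_test Phi_supp show ?thesis by (intro that[of phi "R + 1"]) (auto simp: phi_def)
qed

context fourier_kernel
begin

lemma l2sq_fourier_diff_test_fun:
  assumes "test_fun f" "test_fun g"
  shows "l2sq (\<lambda>p. fourier sg h f p - fourier sg h g p) = l2sq (\<lambda>x. f x - g x)"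
  using parseval_test_fun(2)[OF test_fun_diff[OF assms]]
    fourier_diff[OF cs_sq_int_integrable[OF test_fun_cs_sq_int[OF assms(1)]]
      cs_sq_int_integrable[OF test_fun_cs_sq_int[OF assms(2)]], symmetric]
  by simp

text \<open>On a fixed bounded support, $L^2$ convergence implies $L^1$ convergence, hence uniform
  convergence of the Fourier integrals.\<close>

lemma tendsto_fourier_if_l2_tendsto_supported:
  assumes u: "\<And>k. sq_int (u k)" "\<And>k. supported_in R (u k)"
    and g: "sq_int g" "supported_in R g" and ug: "l2_tendsto u g"
  shows "(\<lambda>k. fourier sg h (u k) p) \<longlonglongrightarrow> fourier sg h g p"
proof -
  have u_int: "integrable lborel (u k)" for k by (rule integrable_if_supported_in(1)[OF u])
  have g_int: "integrable lborel g" by (rule integrable_if_supported_in(1)[OF g])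
  define C where "C = sqrt (l2sq (\<lambda>x. complex_of_real (indicator {-R..R} x)))"
  have le: "cmod (fourier sg h (u k) p - fourier sg h g p)
      \<le> C * sqrt (l2sq (\<lambda>x. u k x - g x)) / sqrt (2 * pi * h)" for k
  proof -
    have "cmod (fourier sg h (u k) p - fourier sg h g p)
        \<le> (LINT x|lborel. cmod (u k x - g x)) / sqrt (2 * pi * h)"
      unfolding fourier_diff[OF u_int g_int, symmetric]
      by (rule norm_fourier_le[OF h_pos]) (use u_int g_int in simp)
    also have "(LINT x|lborel. cmod (u k x - g x)) \<le> C * sqrt (l2sq (\<lambda>x. u k x - g x))"
      unfolding C_def using sq_int_diff[OF u(1) g(1)] supported_in_diff[OF u(2) g(2)]
      unfolding max.idem by (rule integrable_if_supported_in(2))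
    finally show ?thesis using h_pos by (simp add: divide_right_mono)
  qed
  have "(\<lambda>k. sqrt (l2sq (\<lambda>x. u k x - g x))) \<longlonglongrightarrow> 0"
    using tendsto_real_sqrt[OF ug[unfolded l2_tendsto_def]] by simp
  then have "(\<lambda>k. C * sqrt (l2sq (\<lambda>x. u k x - g x)) / sqrt (2 * pi * h)) \<longlonglongrightarrow> C * 0 / sqrt (2 * pi * h)"
    using h_pos by (intro tendsto_intros) auto
  then have "(\<lambda>k. fourier sg h (u k) p - fourier sg h g p) \<longlonglongrightarrow> 0"
    by (intro Lim_null_comparison[OF always_eventually[OF allI[OF le]]]) simp
  then show ?thesis by (simp add: LIM_zero_iff)
qed

lemma parseval_cs_sq_int:
  assumes g: "cs_sq_int g"
  shows "sq_int (fourier sg h g)" and "l2sq (fourier sg h g) = l2sq g"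
proof -
  obtain phi R where phi_test: "\<And>k. test_fun (phi k)" and phi_supp: "\<And>k. supported_in R (phi k)"
    and phi_lim: "l2_tendsto phi g"
    using test_fun_dense[OF g] by blast
  obtain Rg where Rg: "supported_in Rg g" and g_sq: "sq_int g" using g cs_sq_int_def by auto
  have phi_sq: "sq_int (phi k)" for k
    using test_fun_cs_sq_int[OF phi_test] by (simp add: cs_sq_int_def)
  note F_phi = parseval_test_fun[OF phi_test]
  have cauchy: "l2_cauchy (\<lambda>k. fourier sg h (phi k))"
    using l2_cauchy_if_tendsto[OF phi_sq g_sq phi_lim]
    unfolding l2_cauchy_def l2sq_fourier_diff_test_fun[OF phi_test phi_test] .
  have "(\<lambda>k. fourier sg h (phi k) p) \<longlonglongrightarrow> fourier sg h g p" for p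
    using tendsto_fourier_if_l2_tendsto_supported[OF phi_sq _ g_sq _ phi_lim, of "max R Rg"]
      supported_in_diff[OF phi_supp Rg] phi_supp Rg
    by (auto simp: supported_in_def)
  then have F_sq: "sq_int (fourier sg h g)"
    and F_lim: "l2_tendsto (\<lambda>k. fourier sg h (phi k)) (fourier sg h g)"
    using l2_tendsto_if_cauchy_AE[OF F_phi(1) cauchy filterlim_ident, of "fourier sg h g"] g_sq
    by simp_all
  show "sq_int (fourier sg h g)" by (rule F_sq)
  show "l2sq (fourier sg h g) = l2sq g"
    using l2_tendsto_l2sq[OF F_phi(1) F_sq F_lim] l2_tendsto_l2sq[OF phi_sq g_sq phi_lim]
    unfolding F_phi(2) by (rule LIMSEQ_unique)
qed

end

section \<open>The Plancherel transform\<close>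

context fourier_kernel
begin

lemma sq_int_fourier_truncate: "sq_int f \<Longrightarrow> sq_int (fourier sg h (truncate R f))"
  using parseval_cs_sq_int(1)[OF cs_sq_int_truncate] .

lemma l2sq_fourier_truncate_diff:
  assumes f: "sq_int f"
  shows "l2sq (\<lambda>p. fourier sg h (truncate R f) p - fourier sg h (truncate S f) p)
       = l2sq (\<lambda>x. truncate R f x - truncate S f x)"
  using parseval_cs_sq_int(2)[OF cs_sq_int_diff[OF cs_sq_int_truncate[OF f] cs_sq_int_truncate[OF f]]]
    fourier_diff[OF cs_sq_int_integrable[OF cs_sq_int_truncate[OF f]]
      cs_sq_int_integrable[OF cs_sq_int_truncate[OF f]], symmetric]
  by simp

lemma plancherel_spec:
  assumes f: "sq_int f"
  shows "sq_int (plancherel sg h f)"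
    and "l2_tendsto (\<lambda>n. fourier sg h (truncate (real n) f)) (plancherel sg h f)"
proof -
  have spec: "l2_tendsto (\<lambda>n. fourier sg h (truncate (real n) f)) H
      \<longleftrightarrow> (\<lambda>n. LINT p|lborel. (cmod (H p - ft_trunc sg h f (real n) p))\<^sup>2) \<longlonglongrightarrow> 0" for H
    unfolding l2_tendsto_def l2sq_def ft_trunc_eq_fourier_truncate by (simp add: norm_minus_commute)
  have "l2_cauchy (\<lambda>n. fourier sg h (truncate (real n) f))"
    using l2_cauchy_if_tendsto[OF sq_int_truncate[OF f] f l2_tendsto_truncate[OF f filterlim_real_sequentially]]
    unfolding l2_cauchy_def l2sq_fourier_truncate_diff[OF f] .
  then obtain H where "sq_int H" "l2_tendsto (\<lambda>n. fourier sg h (truncate (real n) f)) H"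
    using l2_complete[OF sq_int_fourier_truncate[OF f]] by blast
  then have "\<exists>H. sq_int H \<and> (\<lambda>n. LINT p|lborel. (cmod (H p - ft_trunc sg h f (real n) p))\<^sup>2) \<longlonglongrightarrow> 0"
    by (intro exI[of _ H]) (simp add: spec)
  from someI_ex[OF this]
  show "sq_int (plancherel sg h f)" "l2_tendsto (\<lambda>n. fourier sg h (truncate (real n) f)) (plancherel sg h f)"
    unfolding plancherel_def spec[symmetric] by auto
qed

lemma plancherel_window:
  assumes f: "sq_int f" and R: "filterlim R at_top sequentially"
  shows "l2_tendsto (\<lambda>n. fourier sg h (truncate (R n) f)) (plancherel sg h f)"
proof (rule l2_tendsto_if_close[OF _ _ plancherel_spec[OF f]])
  show "(\<lambda>n. l2sq (\<lambda>p. fourier sg h (truncate (R n) f) p - fourier sg h (truncate (real n) f) p)) \<longlonglongrightarrow> 0"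
    unfolding l2sq_fourier_truncate_diff[OF f]
    by (rule l2sq_diff_tendsto_0[OF sq_int_truncate[OF f] sq_int_truncate[OF f] f
          l2_tendsto_truncate[OF f R] l2_tendsto_truncate[OF f filterlim_real_sequentially]])
qed (use sq_int_fourier_truncate f in auto)

lemma plancherel_isometry:
  assumes f: "sq_int f"
  shows "l2sq (plancherel sg h f) = l2sq f"
proof -
  have "(\<lambda>n. l2sq (fourier sg h (truncate (real n) f))) \<longlonglongrightarrow> l2sq (plancherel sg h f)"
    by (rule l2_tendsto_l2sq[OF sq_int_fourier_truncate[OF f] plancherel_spec[OF f]])
  moreover have "(\<lambda>n. l2sq (truncate (real n) f)) \<longlonglongrightarrow> l2sq f"
    by (rule l2_tendsto_l2sq[OF sq_int_truncate[OF f] f l2_tendsto_truncate[OF f filterlim_real_sequentially]])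
  ultimately show ?thesis
    unfolding parseval_cs_sq_int(2)[OF cs_sq_int_truncate[OF f]] by (rule LIMSEQ_unique)
qed

lemma plancherel_cong_AE:
  assumes f: "sq_int f" and g: "sq_int g" and fg: "AE x in lborel. f x = g x"
  shows "plancherel sg h f = plancherel sg h g"
proof -
  have [measurable]: "f \<in> borel_measurable borel" "g \<in> borel_measurable borel"
    using f g by measurable
  have "(CLINT x|lborel. indicator {-R..R} x * (exp (\<i> * of_real (sg * p * x / h)) * f x))
      = (CLINT x|lborel. indicator {-R..R} x * (exp (\<i> * of_real (sg * p * x / h)) * g x))" for R p
    by (rule integral_cong_AE) (use fg in \<open>auto elim: AE_mp\<close>)
  then show ?thesis unfolding plancherel_def ft_trunc_def by simp
qed

lemma plancherel_lin:
  assumes f: "sq_int f" and g: "sq_int g"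
  shows "AE p in lborel. plancherel sg h (\<lambda>x. a * f x + b * g x) p
                       = a * plancherel sg h f p + b * plancherel sg h g p"
proof -
  have fg: "sq_int (\<lambda>x. a * f x + b * g x)" by (rule sq_int_lin[OF f g])
  have "fourier sg h (truncate (real n) (\<lambda>x. a * f x + b * g x))
      = (\<lambda>p. a * fourier sg h (truncate (real n) f) p + b * fourier sg h (truncate (real n) g) p)" for n
  proof -
    have tr: "truncate (real n) (\<lambda>x. a * f x + b * g x) = (\<lambda>x. a * truncate (real n) f x + b * truncate (real n) g x)"
      by (simp add: truncate_def fun_eq_iff algebra_simps)
    show ?thesis
      unfolding tr by (rule ext, rule fourier_lin[OF cs_sq_int_integrable[OF cs_sq_int_truncate[OF f]]
            cs_sq_int_integrable[OF cs_sq_int_truncate[OF g]]])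
  qed
  then have "l2_tendsto (\<lambda>n. fourier sg h (truncate (real n) (\<lambda>x. a * f x + b * g x)))
      (\<lambda>p. a * plancherel sg h f p + b * plancherel sg h g p)"
    using l2_tendsto_lin[OF sq_int_fourier_truncate[OF f] sq_int_fourier_truncate[OF g]
        plancherel_spec(1)[OF f] plancherel_spec(1)[OF g] plancherel_spec(2)[OF f]
        plancherel_spec(2)[OF g]]
    by simp
  then show ?thesis
    using l2_tendsto_unique_AE[OF sq_int_fourier_truncate[OF fg] plancherel_spec(1)[OF fg]
        sq_int_lin[OF plancherel_spec(1)[OF f] plancherel_spec(1)[OF g]] plancherel_spec(2)[OF fg]]
    by blast
qed

lemma inner_fourier_truncate_eq_inner_plancherel:
  assumes f: "sq_int f" and u: "sq_int u"
  shows "(CLINT x|lborel. fourier (-sg) h (truncate R u) x * cnj (f x))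
       = (CLINT x|lborel. truncate R u x * cnj (plancherel sg h f x))"
proof -
  interpret inv: fourier_kernel "-sg" h by (rule fourier_kernel_neg)
  have lim_f: "(\<lambda>m. CLINT x|lborel. fourier (-sg) h (truncate R u) x * cnj (truncate (real m) f x))
      \<longlonglongrightarrow> (CLINT x|lborel. fourier (-sg) h (truncate R u) x * cnj (f x))"
    by (rule l2_tendsto_inner_right[OF sq_int_truncate[OF f] f inv.sq_int_fourier_truncate[OF u]
          l2_tendsto_truncate[OF f filterlim_real_sequentially]])
  have lim_P: "(\<lambda>m. CLINT x|lborel. truncate R u x * cnj (fourier sg h (truncate (real m) f) x))
      \<longlonglongrightarrow> (CLINT x|lborel. truncate R u x * cnj (plancherel sg h f x))"
    by (rule l2_tendsto_inner_right[OF sq_int_fourier_truncate[OF f] plancherel_spec(1)[OF f]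
          sq_int_truncate[OF u] plancherel_spec(2)[OF f]])
  have "(CLINT x|lborel. fourier (-sg) h (truncate R u) x * cnj (truncate (real m) f x))
      = (CLINT x|lborel. truncate R u x * cnj (fourier sg h (truncate (real m) f) x))" for m
    using fourier_adjoint[OF cs_sq_int_integrable[OF cs_sq_int_truncate[OF u]]
        cs_sq_int_integrable[OF cs_sq_int_truncate[OF f]], of "-sg" h] by simp
  with lim_f have "(\<lambda>m. CLINT x|lborel. truncate R u x * cnj (fourier sg h (truncate (real m) f) x))
      \<longlonglongrightarrow> (CLINT x|lborel. fourier (-sg) h (truncate R u) x * cnj (f x))"
    by simp
  from this lim_P show ?thesis by (rule LIMSEQ_unique)
qed

text \<open>The inverse transform is computed from the adjoint relation
  $\langle \mathcal F^{-1} u, f\rangle = \langle u, \mathcal F f\rangle$, which together with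
  the isometry property forces $\|\mathcal F^{-1}\mathcal F f - f\| = 0$.\<close>

lemma plancherel_inverse:
  assumes f: "sq_int f"
  shows "AE x in lborel. plancherel (-sg) h (plancherel sg h f) x = f x"
proof -
  interpret inv: fourier_kernel "-sg" h by (rule fourier_kernel_neg)
  define u where "u = plancherel sg h f"
  define v where "v = plancherel (-sg) h u"
  have u: "sq_int u" using plancherel_spec(1)[OF f] unfolding u_def .
  have v: "sq_int v" and v_lim: "l2_tendsto (\<lambda>n. fourier (-sg) h (truncate (real n) u)) v"
    using inv.plancherel_spec[OF u] unfolding v_def by auto
  have tr_lim: "l2_tendsto (\<lambda>n. truncate (real n) k) k" if "sq_int k" for k
    by (rule l2_tendsto_truncate[OF that filterlim_real_sequentially])
  have adjoint: "(CLINT x|lborel. fourier (-sg) h (truncate (real n) u) x * cnj (f x))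
      = (CLINT x|lborel. truncate (real n) u x * cnj (u x))" for n
    unfolding u_def by (rule inner_fourier_truncate_eq_inner_plancherel[OF f plancherel_spec(1)[OF f]])
  have "(\<lambda>n. CLINT x|lborel. fourier (-sg) h (truncate (real n) u) x * cnj (f x))
      \<longlonglongrightarrow> (CLINT x|lborel. v x * cnj (f x))"
    by (rule l2_tendsto_inner_left[OF inv.sq_int_fourier_truncate[OF u] v f v_lim])
  moreover have "(\<lambda>n. CLINT x|lborel. truncate (real n) u x * cnj (u x))
      \<longlonglongrightarrow> (CLINT x|lborel. u x * cnj (u x))"
    by (rule l2_tendsto_inner_left[OF sq_int_truncate[OF u] u u tr_lim[OF u]])
  ultimately have "(CLINT x|lborel. v x * cnj (f x)) = complex_of_real (l2sq u)"
    unfolding adjoint integral_mult_cnj_self by (rule LIMSEQ_unique)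
  moreover have "l2sq u = l2sq f" unfolding u_def by (rule plancherel_isometry[OF f])
  moreover have "l2sq v = l2sq u" unfolding v_def by (rule inv.plancherel_isometry[OF u])
  ultimately have "l2sq (\<lambda>x. v x - f x) = 0"
    unfolding l2sq_diff_expand[OF v f] by simp
  from l2sq_eq_0_imp_AE[OF sq_int_diff[OF v f] this] show ?thesis
    unfolding v_def u_def by simp
qed

end

section \<open>The dilation $S$\<close>

lemma sq_int_compose_scale:
  assumes g: "sq_int g" and c: "c \<noteq> 0"
  shows "sq_int (\<lambda>x. g (c * x))" and "l2sq (\<lambda>x. g (c * x)) = l2sq g / \<bar>c\<bar>"
proof -
  have [measurable]: "g \<in> borel_measurable borel" using g by measurable
  show "sq_int (\<lambda>x. g (c * x))"
    using lborel_integrable_real_affine[OF sq_int_integrable[OF g] c, of 0] by (intro sq_intI) auto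
  have "l2sq g = \<bar>c\<bar> *\<^sub>R (LINT x|lborel. (cmod (g (0 + c * x)))\<^sup>2)"
    unfolding l2sq_def by (rule lborel_integral_real_affine[OF c])
  then show "l2sq (\<lambda>x. g (c * x)) = l2sq g / \<bar>c\<bar>" using c unfolding l2sq_def by simp
qed

lemma AE_compose_scale:
  fixes a b :: wf
  assumes [measurable]: "a \<in> borel_measurable borel" "b \<in> borel_measurable borel"
    and c: "c \<noteq> 0" and ab: "AE x in lborel. a x = b x"
  shows "AE x in lborel. a (c * x) = b (c * x)"
  using AE_borel_affine[OF c _ ab, of 0] by simp

lemma Sdil_scale: "Sdil f = (\<lambda>x. complex_of_real (1 / sqrt 2) * f ((1/2) * x))"
  unfolding Sdil_def by simp

lemma sq_int_Sdil:
  assumes f: "sq_int f"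
  shows "sq_int (Sdil f)" and "l2sq (Sdil f) = l2sq f"
proof -
  show "sq_int (Sdil f)"
    unfolding Sdil_scale by (intro sq_int_cmult sq_int_compose_scale[OF f]) simp
  have "l2sq (Sdil f) = (1/2) * l2sq (\<lambda>x. f ((1/2) * x))"
    unfolding Sdil_scale l2sq_cmult by (simp add: norm_divide power_divide)
  also have "\<dots> = l2sq f" using sq_int_compose_scale(2)[OF f, of "1/2"] by simp
  finally show "l2sq (Sdil f) = l2sq f" .
qed

lemma Sdil_cong_AE:
  assumes "a \<in> borel_measurable borel" "b \<in> borel_measurable borel" "AE x in lborel. a x = b x"
  shows "AE x in lborel. Sdil a x = Sdil b x"
  using AE_compose_scale[OF assms(1,2) _ assms(3), of "1/2"] unfolding Sdil_scale by auto

definition Sdil_inv :: op where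
  "Sdil_inv g p = complex_of_real (sqrt 2) * g (2 * p)"

lemma Sdil_Sdil_inv: "Sdil (Sdil_inv g) = g"
  unfolding Sdil_def Sdil_inv_def by (auto simp flip: of_real_mult)

lemma sq_int_Sdil_inv: "sq_int g \<Longrightarrow> sq_int (Sdil_inv g)"
  unfolding Sdil_inv_def[abs_def] by (intro sq_int_cmult sq_int_compose_scale) simp_all

context fourier_kernel
begin

lemma fourier_truncate_Sdil:
  "fourier sg h (truncate R (Sdil f)) p = complex_of_real (sqrt 2) * fourier sg h (truncate (R / 2) f) (2 * p)"
proof -
  define F where "F x = exp (\<i> * complex_of_real (sg * p * x / h)) * truncate R (Sdil f) x" for x
  have F_scaled: "F (0 + 2 * y) = complex_of_real (1 / sqrt 2)
      * (exp (\<i> * complex_of_real (sg * (2 * p) * y / h)) * truncate (R / 2) f y)" for y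
  proof -
    have "indicator {-R..R} (2 * y) = (indicator {-(R/2)..R/2} y :: complex)"
      by (auto simp: indicator_def)
    then show ?thesis unfolding F_def truncate_def Sdil_def by (simp add: mult_ac)
  qed
  have "(CLINT x|lborel. F x) = \<bar>2::real\<bar> *\<^sub>R (CLINT y|lborel. F (0 + 2 * y))"
    by (rule lborel_integral_real_affine) simp
  also have "\<dots> = complex_of_real (sqrt 2)
      * (CLINT y|lborel. exp (\<i> * complex_of_real (sg * (2 * p) * y / h)) * truncate (R / 2) f y)"
  proof -
    have "complex_of_real 2 * complex_of_real (1 / sqrt 2) = complex_of_real (sqrt 2)"
      using real_div_sqrt[of 2] by (metis of_real_mult times_divide_eq_right mult_1_right zero_le_numeral)
    moreover have "(CLINT y|lborel. F (0 + 2 * y)) = complex_of_real (1 / sqrt 2)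
        * (CLINT y|lborel. exp (\<i> * complex_of_real (sg * (2 * p) * y / h)) * truncate (R / 2) f y)"
      unfolding F_scaled by (rule integral_mult_right_zero)
    ultimately show ?thesis
      by (simp only: scaleR_conv_of_real mult.assoc[symmetric]) simp
  qed
  finally show ?thesis unfolding fourier_def F_def by simp
qed

lemma plancherel_Sdil:
  assumes f: "sq_int f"
  shows "AE p in lborel. plancherel sg h (Sdil f) p = Sdil_inv (plancherel sg h f) p"
proof (rule l2_tendsto_unique_AE[OF sq_int_fourier_truncate[OF sq_int_Sdil(1)[OF f]]
      plancherel_spec(1)[OF sq_int_Sdil(1)[OF f]] sq_int_Sdil_inv[OF plancherel_spec(1)[OF f]]])
  show "l2_tendsto (\<lambda>n. fourier sg h (truncate (real n) (Sdil f))) (plancherel sg h (Sdil f))"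
    by (rule plancherel_spec(2)[OF sq_int_Sdil(1)[OF f]])
  have half: "filterlim (\<lambda>n::nat. real n / 2) at_top sequentially"
    unfolding filterlim_at_top eventually_sequentially
  proof
    fix Z :: real
    obtain N :: nat where "2 * Z \<le> real N" using real_arch_simple by blast
    then show "\<exists>N. \<forall>n\<ge>N. Z \<le> real n / 2" by (intro exI[of _ N]) auto
  qed
  have "l2sq (\<lambda>p. fourier sg h (truncate (real n) (Sdil f)) p - Sdil_inv (plancherel sg h f) p)
      = l2sq (\<lambda>p. fourier sg h (truncate (real n / 2) f) p - plancherel sg h f p)" for n
  proof -
    define G where "G p = fourier sg h (truncate (real n / 2) f) p - plancherel sg h f p" for p
    have G: "sq_int G"
      unfolding G_def by (intro sq_int_diff sq_int_fourier_truncate f plancherel_spec(1))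
    have "l2sq (\<lambda>p. fourier sg h (truncate (real n) (Sdil f)) p - Sdil_inv (plancherel sg h f) p)
        = l2sq (\<lambda>p. complex_of_real (sqrt 2) * G (2 * p))"
      unfolding G_def Sdil_inv_def fourier_truncate_Sdil by (simp add: algebra_simps)
    also have "\<dots> = l2sq G"
      unfolding l2sq_cmult using sq_int_compose_scale(2)[OF G, of 2] by simp
    finally show ?thesis unfolding G_def .
  qed
  then show "l2_tendsto (\<lambda>n. fourier sg h (truncate (real n) (Sdil f))) (Sdil_inv (plancherel sg h f))"
    using plancherel_window[OF f half] unfolding l2_tendsto_def by simp
qed

end

section \<open>Unitary operators\<close>

lemma unitary_L2D:
  assumes "unitary_L2 U"
  shows unitary_L2_sq_int: "sq_int f \<Longrightarrow> sq_int (U f)"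
    and unitary_L2_cong: "sq_int f \<Longrightarrow> sq_int g \<Longrightarrow> AE x in lborel. f x = g x \<Longrightarrow> AE x in lborel. U f x = U g x"
    and unitary_L2_lin: "sq_int f \<Longrightarrow> sq_int g \<Longrightarrow>
      AE x in lborel. U (\<lambda>y. a * f y + b * g y) x = a * U f x + b * U g x"
    and unitary_L2_isometry: "sq_int f \<Longrightarrow> l2norm (U f) = l2norm f"
    and unitary_L2_surj: "sq_int g \<Longrightarrow> \<exists>f. sq_int f \<and> (AE x in lborel. U f x = g x)"
  using assms unfolding unitary_L2_def by simp_all

lemma unitary_L2_comp:
  assumes U: "unitary_L2 U" and V: "unitary_L2 V"
  shows "unitary_L2 (U \<circ> V)"
  unfolding unitary_L2_def comp_def
proof (intro conjI allI impI)
  note U_sq = unitary_L2_sq_int[OF U] and V_sq = unitary_L2_sq_int[OF V]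
  fix f g :: wf and a b :: complex
  show "sq_int f \<Longrightarrow> sq_int (U (V f))" by (simp add: U_sq V_sq)
  show "sq_int f \<Longrightarrow> sq_int g \<Longrightarrow> AE x in lborel. f x = g x \<Longrightarrow> AE x in lborel. U (V f) x = U (V g) x"
    by (intro unitary_L2_cong[OF U] V_sq unitary_L2_cong[OF V])
  show "sq_int f \<Longrightarrow> l2norm (U (V f)) = l2norm f"
    by (simp add: unitary_L2_isometry[OF U] unitary_L2_isometry[OF V] V_sq)
  assume f: "sq_int f" and g: "sq_int g"
  have "AE x in lborel. U (V (\<lambda>y. a * f y + b * g y)) x = U (\<lambda>y. a * V f y + b * V g y) x"
    by (intro unitary_L2_cong[OF U] V_sq sq_int_lin f g unitary_L2_lin[OF V])
  moreover have "AE x in lborel. U (\<lambda>y. a * V f y + b * V g y) x = a * U (V f) x + b * U (V g) x"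
    by (intro unitary_L2_lin[OF U] V_sq f g)
  ultimately show "AE x in lborel. U (V (\<lambda>y. a * f y + b * g y)) x = a * U (V f) x + b * U (V g) x"
    by eventually_elim simp
next
  fix g :: wf assume g: "sq_int g"
  obtain f' where f': "sq_int f'" "AE x in lborel. U f' x = g x"
    using unitary_L2_surj[OF U g] by blast
  obtain f where f: "sq_int f" "AE x in lborel. V f x = f' x"
    using unitary_L2_surj[OF V f'(1)] by blast
  have "AE x in lborel. U (V f) x = U f' x"
    by (intro unitary_L2_cong[OF U] unitary_L2_sq_int[OF V] f f')
  with f'(2) have "AE x in lborel. U (V f) x = g x" by eventually_elim simp
  with f(1) show "\<exists>f. sq_int f \<and> (AE x in lborel. U (V f) x = g x)" by blast
qed

lemma unitary_L2_cong_AE: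
  assumes U: "unitary_L2 U" and V_meas: "\<And>f. sq_int f \<Longrightarrow> V f \<in> borel_measurable borel"
    and VU: "\<And>f. sq_int f \<Longrightarrow> AE x in lborel. V f x = U f x"
  shows "unitary_L2 V"
proof -
  have V_sq: "sq_int (V f)" if "sq_int f" for f
    using sq_int_cong_AE[OF unitary_L2_sq_int[OF U that] V_meas[OF that]] VU[OF that] by (simp add: eq_commute)
  show ?thesis
    unfolding unitary_L2_def
  proof (intro conjI allI impI)
    fix f g :: wf and a b :: complex
    show "sq_int f \<Longrightarrow> sq_int (V f)" by (rule V_sq)
    show "AE x in lborel. V f x = V g x" if "sq_int f" "sq_int g" "AE x in lborel. f x = g x"
      using VU[OF that(1)] VU[OF that(2)] unitary_L2_cong[OF U that] by eventually_elim simp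
    show "l2norm (V f) = l2norm f" if "sq_int f"
      using l2sq_cong_AE[OF V_meas[OF that] _ VU[OF that]] unitary_L2_sq_int[OF U that]
        unitary_L2_isometry[OF U that]
      by (simp add: l2norm_eq_sqrt_l2sq)
    show "AE x in lborel. V (\<lambda>y. a * f y + b * g y) x = a * V f x + b * V g x" if "sq_int f" "sq_int g"
      using VU[OF sq_int_lin[OF that, where a=a and b=b]] VU[OF that(1)] VU[OF that(2)]
        unitary_L2_lin[OF U that, where a=a and b=b]
      by eventually_elim simp
  next
    fix g :: wf assume "sq_int g"
    then obtain f where f: "sq_int f" and Uf: "AE x in lborel. U f x = g x"
      using unitary_L2_surj[OF U] by blast
    have "AE x in lborel. V f x = g x" using VU[OF f] Uf by eventually_elim simp
    with f show "\<exists>f. sq_int f \<and> (AE x in lborel. V f x = g x)" by blast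
  qed
qed

lemma unitary_L2_pos_fun:
  assumes [measurable]: "g \<in> borel_measurable borel" and g1: "\<And>x. cmod (g x) = 1"
  shows "unitary_L2 (pos_fun g)"
  unfolding unitary_L2_def pos_fun_def
proof (intro conjI allI impI)
  fix f k :: wf and a b :: complex
  show "sq_int f \<Longrightarrow> sq_int (\<lambda>x. g x * f x)" by (rule sq_int_mult_bounded[where B=1]) (simp_all add: g1)
  show "AE x in lborel. f x = k x \<Longrightarrow> AE x in lborel. g x * f x = g x * k x" by (auto elim: AE_mp)
  show "AE x in lborel. g x * (a * f x + b * k x) = a * (g x * f x) + b * (g x * k x)"
    by (simp add: algebra_simps)
  show "l2norm (\<lambda>x. g x * f x) = l2norm f" by (simp add: l2norm_def norm_mult g1)
  assume "sq_int k"
  moreover have "g x * (cnj (g x) * k x) = k x" for x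
    using complex_norm_square[of "g x"] by (simp add: g1 mult.assoc[symmetric])
  ultimately show "\<exists>f. sq_int f \<and> (AE x in lborel. g x * f x = k x)"
    by (intro exI[of _ "\<lambda>x. cnj (g x) * k x"]) (auto intro: sq_int_mult_bounded simp: g1)
qed

lemma unitary_L2_Sdil: "unitary_L2 Sdil"
  unfolding unitary_L2_def
proof (intro conjI allI impI)
  fix f g :: wf and a b :: complex
  show "sq_int f \<Longrightarrow> sq_int (Sdil f)" by (rule sq_int_Sdil(1))
  show "sq_int f \<Longrightarrow> sq_int g \<Longrightarrow> AE x in lborel. f x = g x \<Longrightarrow> AE x in lborel. Sdil f x = Sdil g x"
    by (intro Sdil_cong_AE) auto
  show "AE x in lborel. Sdil (\<lambda>y. a * f y + b * g y) x = a * Sdil f x + b * Sdil g x"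
    by (simp add: Sdil_def algebra_simps)
  show "sq_int f \<Longrightarrow> l2norm (Sdil f) = l2norm f" by (simp add: l2norm_eq_sqrt_l2sq sq_int_Sdil(2))
  show "sq_int g \<Longrightarrow> \<exists>f. sq_int f \<and> (AE x in lborel. Sdil f x = g x)"
    by (intro exI[of _ "Sdil_inv g"]) (simp add: sq_int_Sdil_inv Sdil_Sdil_inv)
qed

lemma (in fourier_kernel) unitary_L2_plancherel: "unitary_L2 (plancherel sg h)"
  unfolding unitary_L2_def
proof (intro conjI allI impI)
  interpret inv: fourier_kernel "-sg" h by (rule fourier_kernel_neg)
  fix f g :: wf and a b :: complex
  show "sq_int f \<Longrightarrow> sq_int (plancherel sg h f)" by (rule plancherel_spec(1))
  show "sq_int f \<Longrightarrow> sq_int g \<Longrightarrow> AE x in lborel. f x = g x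
      \<Longrightarrow> AE x in lborel. plancherel sg h f x = plancherel sg h g x"
    using plancherel_cong_AE[of f g] by simp
  show "sq_int f \<Longrightarrow> sq_int g \<Longrightarrow>
      AE x in lborel. plancherel sg h (\<lambda>y. a * f y + b * g y) x = a * plancherel sg h f x + b * plancherel sg h g x"
    by (rule plancherel_lin)
  show "sq_int f \<Longrightarrow> l2norm (plancherel sg h f) = l2norm f"
    by (simp add: l2norm_eq_sqrt_l2sq plancherel_isometry)
  show "sq_int g \<Longrightarrow> \<exists>f. sq_int f \<and> (AE x in lborel. plancherel sg h f x = g x)"
    using inv.plancherel_inverse inv.plancherel_spec(1) by (intro exI[of _ "plancherel (-sg) h g"]) simp
qed

section \<open>Functions of the momentum operator\<close>

locale momentum =
  fixes h :: real
  assumes h_pos: "0 < h"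

sublocale momentum \<subseteq> to_momentum: fourier_kernel "-1" h
  using h_pos by unfold_locales simp_all

sublocale momentum \<subseteq> to_position: fourier_kernel 1 h
  using h_pos by unfold_locales simp_all

definition bounded_symbol :: "(real \<Rightarrow> complex) \<Rightarrow> bool" where
  "bounded_symbol g \<longleftrightarrow> g \<in> borel_measurable borel \<and> (\<forall>p. cmod (g p) \<le> 1)"

lemma sq_int_mult_bounded_symbol: "bounded_symbol g \<Longrightarrow> sq_int F \<Longrightarrow> sq_int (\<lambda>p. g p * F p)"
  unfolding bounded_symbol_def by (intro sq_int_mult_bounded[where B=1]) auto

context momentum
begin

lemma mom_fun_eq_comp: "mom_fun h g = plancherel 1 h \<circ> pos_fun g \<circ> plancherel (-1) h"
  by (simp add: fun_eq_iff mom_fun_def pos_fun_def)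

lemma unitary_L2_mom_fun:
  "g \<in> borel_measurable borel \<Longrightarrow> (\<And>p. cmod (g p) = 1) \<Longrightarrow> unitary_L2 (mom_fun h g)"
  unfolding mom_fun_eq_comp
  by (intro unitary_L2_comp unitary_L2_pos_fun to_momentum.unitary_L2_plancherel
      to_position.unitary_L2_plancherel)

lemma sq_int_mom_fun: "sq_int f \<Longrightarrow> bounded_symbol g \<Longrightarrow> sq_int (mom_fun h g f)"
  unfolding mom_fun_def
  by (intro to_position.plancherel_spec(1) sq_int_mult_bounded_symbol to_momentum.plancherel_spec(1))

lemma mom_fun_mult:
  assumes f: "sq_int f" and g1: "bounded_symbol g1" and g2: "bounded_symbol g2"
  shows "mom_fun h g2 (mom_fun h g1 f) = mom_fun h (\<lambda>p. g2 p * g1 p) f"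
proof -
  define X where "X p = g1 p * plancherel (-1) h f p" for p
  have X: "sq_int X" unfolding X_def by (intro sq_int_mult_bounded_symbol g1 to_momentum.plancherel_spec(1) f)
  have [measurable]: "g2 \<in> borel_measurable borel" using g2 bounded_symbol_def by auto
  have "AE p in lborel. g2 p * plancherel (-1) h (plancherel 1 h X) p = g2 p * X p"
    using to_position.plancherel_inverse[OF X] by (auto elim: AE_mp)
  then have "plancherel 1 h (\<lambda>p. g2 p * plancherel (-1) h (plancherel 1 h X) p) = plancherel 1 h (\<lambda>p. g2 p * X p)"
    by (intro to_position.plancherel_cong_AE sq_int_mult_bounded_symbol g2 X
        to_momentum.plancherel_spec(1) to_position.plancherel_spec(1))
  then show ?thesis unfolding mom_fun_def X_def[symmetric] by (simp add: X_def mult.assoc)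
qed

lemma mom_fun_add:
  assumes f: "sq_int f" and g1: "bounded_symbol g1" and g2: "bounded_symbol g2"
  shows "AE x in lborel. mom_fun h g1 f x + mom_fun h g2 f x = mom_fun h (\<lambda>p. g1 p + g2 p) f x"
proof -
  have "AE x in lborel. plancherel 1 h (\<lambda>p. 1 * (g1 p * plancherel (-1) h f p) + 1 * (g2 p * plancherel (-1) h f p)) x
      = 1 * mom_fun h g1 f x + 1 * mom_fun h g2 f x"
    unfolding mom_fun_def
    by (intro to_position.plancherel_lin sq_int_mult_bounded_symbol g1 g2 to_momentum.plancherel_spec(1) f)
  then show ?thesis unfolding mom_fun_def by (auto simp: algebra_simps elim: AE_mp)
qed

lemma mom_fun_Sdil:
  assumes f: "sq_int f" and g: "bounded_symbol g"
  shows "AE x in lborel. mom_fun h g (Sdil f) x = Sdil (mom_fun h (\<lambda>q. g (q / 2)) f) x"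
proof -
  have [measurable]: "g \<in> borel_measurable borel" using g bounded_symbol_def by auto
  define k where "k q = g (q / 2) * plancherel (-1) h f q" for q
  have g_half: "bounded_symbol (\<lambda>q. g (q / 2))" using g unfolding bounded_symbol_def by auto
  have k: "sq_int k" unfolding k_def
    by (intro sq_int_mult_bounded_symbol g_half to_momentum.plancherel_spec(1) f)
  have k2: "sq_int (Sdil_inv k)" by (rule sq_int_Sdil_inv[OF k])
  have "AE p in lborel. g p * plancherel (-1) h (Sdil f) p = Sdil_inv k p"
    using to_momentum.plancherel_Sdil[OF f] by (auto simp: Sdil_inv_def k_def mult_ac elim: AE_mp)
  then have lhs: "mom_fun h g (Sdil f) = plancherel 1 h (Sdil_inv k)"
    unfolding mom_fun_def
    by (intro to_position.plancherel_cong_AE sq_int_mult_bounded_symbol g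
        to_momentum.plancherel_spec(1) sq_int_Sdil(1) f k2)
  have "AE p in lborel. plancherel 1 h k p = Sdil_inv (plancherel 1 h (Sdil_inv k)) p"
    using to_position.plancherel_Sdil[OF k2] unfolding Sdil_Sdil_inv .
  then have rhs_AE: "AE p in lborel. Sdil (plancherel 1 h k) p = plancherel 1 h (Sdil_inv k) p"
    using Sdil_cong_AE[of "plancherel 1 h k" "Sdil_inv (plancherel 1 h (Sdil_inv k))"]
      to_position.plancherel_spec(1)[OF k] sq_int_Sdil_inv[OF to_position.plancherel_spec(1)[OF k2]]
    unfolding Sdil_Sdil_inv by auto
  have rhs: "mom_fun h (\<lambda>q. g (q / 2)) f = plancherel 1 h k"
    unfolding mom_fun_def k_def ..
  show ?thesis
    using rhs_AE unfolding lhs rhs by eventually_elim simp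
qed

end

section \<open>The operator $F$\<close>

definition phase :: "real \<Rightarrow> real \<Rightarrow> real \<Rightarrow> complex" where
  "phase h s t = exp (\<i> * complex_of_real (s * t / h))"

text \<open>$L + X^{-1}R$ is multiplication by \<open>pos_symbol h\<close>, and $E_p + Y^{-1/2}O_p$ is the function
  \<open>mom_symbol h\<close> of $\widehat p$.\<close>

definition pos_symbol :: "real \<Rightarrow> real \<Rightarrow> complex" where
  "pos_symbol h x = indicator setL x + phase h (-1) x * indicator setR x"

definition mom_symbol :: "real \<Rightarrow> real \<Rightarrow> complex" where
  "mom_symbol h p = indicator setE p + phase h (-1/2) p * indicator setO p"

lemma phase_measurable[measurable]: "phase h s \<in> borel_measurable borel"
  unfolding phase_def[abs_def] by measurable

lemma norm_phase[simp]: "cmod (phase h s t) = 1"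
  by (simp add: phase_def)

lemma pos_symbol_measurable[measurable]: "pos_symbol h \<in> borel_measurable borel"
  unfolding pos_symbol_def[abs_def] by measurable

lemma mom_symbol_measurable[measurable]: "mom_symbol h \<in> borel_measurable borel"
  unfolding mom_symbol_def[abs_def] by measurable

lemma norm_pos_symbol: "cmod (pos_symbol h x) = 1"
  by (cases "x \<in> setL") (auto simp: pos_symbol_def setR_eq_Compl_setL)

lemma norm_mom_symbol: "cmod (mom_symbol h p) = 1"
  by (cases "p \<in> setE") (auto simp: mom_symbol_def setO_eq_Compl_setE)

lemma bounded_symbol_indicator: "S \<in> sets borel \<Longrightarrow> bounded_symbol (indicator S)"
  unfolding bounded_symbol_def by (auto simp: indicator_def)

lemma bounded_symbol_phase_indicator:
  "S \<in> sets borel \<Longrightarrow> bounded_symbol (\<lambda>p. phase h s p * indicator S p)"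
  unfolding bounded_symbol_def by (auto simp: indicator_def)

lemma bounded_symbol_phase: "bounded_symbol (phase h s)"
  unfolding bounded_symbol_def by simp

lemma Xpow_eq_pos_fun: "Xpow h s = pos_fun (phase h s)"
  unfolding Xpow_def phase_def[abs_def] ..

lemma Ypow_eq_mom_fun: "Ypow h s = mom_fun h (phase h s)"
  unfolding Ypow_def phase_def[abs_def] ..

lemma position_factor_eq: "op_add Lp (Xpow h (-1) \<circ> Rp) = pos_fun (pos_symbol h)"
  by (simp add: fun_eq_iff op_add_def Lp_def Rp_def Xpow_eq_pos_fun pos_fun_def pos_symbol_def
      algebra_simps)

lemma position_factor_half_eq:
  "op_add Epos (Xpow h (-1/2) \<circ> Opos) = pos_fun (\<lambda>x. pos_symbol h (x / 2))"
proof -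
  have "phase h (-1) (x / 2) = phase h (-1/2) x" for x by (simp add: phase_def)
  then show ?thesis
    by (simp add: fun_eq_iff op_add_def Epos_def Opos_def Xpow_eq_pos_fun pos_fun_def pos_symbol_def
        indicator_setL_half indicator_setR_half algebra_simps)
qed

context momentum
begin

lemma momentum_factor_AE:
  assumes f: "sq_int f"
  shows "AE x in lborel. op_add (Ep h) (Ypow h (-1/2) \<circ> Op h) f x = mom_fun h (mom_symbol h) f x"
proof -
  have "Ypow h (-1/2) (Op h f) = mom_fun h (\<lambda>p. phase h (-1/2) p * indicator setO p) f"
    unfolding Ypow_eq_mom_fun Op_def
    by (rule mom_fun_mult[OF f bounded_symbol_indicator[OF setO_sets] bounded_symbol_phase])
  then show ?thesis
    using mom_fun_add[OF f bounded_symbol_indicator[OF setE_sets] bounded_symbol_phase_indicator[OF setO_sets]]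
    unfolding op_add_def Ep_def mom_symbol_def[abs_def] by simp
qed

lemma momentum_factor_measurable:
  assumes f: "sq_int f"
  shows "op_add (Ep h) (Ypow h (-1/2) \<circ> Op h) f \<in> borel_measurable borel"
proof -
  have "sq_int (Ep h f)" "sq_int (Ypow h (-1/2) (Op h f))"
    unfolding Ep_def Op_def Ypow_eq_mom_fun
    by (intro sq_int_mom_fun f bounded_symbol_indicator bounded_symbol_phase setE_sets setO_sets)+
  then show ?thesis unfolding op_add_def comp_def by measurable
qed

lemma momentum_factor_Sdil:
  assumes f: "sq_int f"
  shows "AE x in lborel. op_add (Bm h) (Ypow h (-1) \<circ> Tm h) (Sdil f) x
                       = Sdil (op_add (Ep h) (Ypow h (-1/2) \<circ> Op h) f) x"
proof -
  have "AE x in lborel. Bm h (Sdil f) x = Sdil (Ep h f) x"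
    using mom_fun_Sdil[OF f bounded_symbol_indicator[OF setL_sets]]
    unfolding Bm_def Ep_def indicator_setL_half .
  moreover have "AE x in lborel. Ypow h (-1) (Tm h (Sdil f)) x = Sdil (Ypow h (-1/2) (Op h f)) x"
  proof -
    have "phase h (-1) (q / 2) = phase h (-1/2) q" for q by (simp add: phase_def)
    moreover have "Ypow h s (mom_fun h (indicator S) g) = mom_fun h (\<lambda>p. phase h s p * indicator S p) g"
      if "S \<in> sets borel" "sq_int g" for s S g
      unfolding Ypow_eq_mom_fun
      by (rule mom_fun_mult[OF that(2) bounded_symbol_indicator[OF that(1)] bounded_symbol_phase])
    ultimately show ?thesis
      using mom_fun_Sdil[OF f bounded_symbol_phase_indicator[OF setR_sets, of h "-1"]]
      unfolding Tm_def Op_def by (simp add: sq_int_Sdil(1)[OF f] f indicator_setR_half)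
  qed
  ultimately show ?thesis
    unfolding op_add_def comp_def by eventually_elim (simp add: Sdil_def algebra_simps)
qed

end

theorem lemma2:
  fixes hbar :: real
  assumes "hbar > 0"
  defines "F1 \<equiv> Sdil \<circ> op_add Lp (Xpow hbar (-1) \<circ> Rp)
                     \<circ> op_add (Ep hbar) (Ypow hbar (-1/2) \<circ> Op hbar)"
      and "F2 \<equiv> op_add Epos (Xpow hbar (-1/2) \<circ> Opos)
                     \<circ> op_add (Bm hbar) (Ypow hbar (-1) \<circ> Tm hbar) \<circ> Sdil"
  shows "(\<forall>f. sq_int f \<longrightarrow> (AE x in lborel. F1 f x = F2 f x)) \<and> unitary_L2 F1"
proof -
  interpret momentum hbar by unfold_locales (rule assms(1))
  let ?M = "op_add (Ep hbar) (Ypow hbar (-1/2) \<circ> Op hbar)"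
  have F1: "F1 = Sdil \<circ> pos_fun (pos_symbol hbar) \<circ> ?M"
    unfolding F1_def position_factor_eq ..
  have "unitary_L2 ?M"
    by (rule unitary_L2_cong_AE[OF unitary_L2_mom_fun momentum_factor_measurable momentum_factor_AE])
       (simp_all add: norm_mom_symbol)
  then have "unitary_L2 F1"
    unfolding F1 by (intro unitary_L2_comp unitary_L2_Sdil unitary_L2_pos_fun) (simp_all add: norm_pos_symbol)
  moreover have "AE x in lborel. F1 f x = F2 f x" if f: "sq_int f" for f
    using momentum_factor_Sdil[OF f]
    unfolding F1 F2_def position_factor_half_eq by eventually_elim (simp add: pos_fun_def Sdil_def)
  ultimately show ?thesis by blast
qed

end
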